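(* Let $G$ be an expansion of a weakly 4-connected graph. Then $G$ is 3-connected, and if $G$ is not a prism, then for every non-trivial separation $(A,B)$ of $G$ of order three, exactly one of $(A,B)$, $(B,A)$ is degenerate.
   Context: Graphs are finite and simple. A separation of $G$ is a pair $(A,B)$ of subsets of $V(G)$ with $A\cup B=V(G)$ and no edge between $A-B$ and $B-A$; its order is $|A\cap B|$; it is non-trivial if $A\neq V(G)\neq B$. A graph is weakly 4-connected if it is 3-connected, has at least five vertices, and for every separation $(A,B)$ of order at most three one of $G[A]$, $G[B]$ has at most four edges. A prism is a graph with exactly six vertices whose complement is a 6-cycle. Splitting: for a vertex $v$ of degree at least 4 and a partition $(N_1,N_2)$ of its neighbours with $|N_1|,|N_2|\ge2$, replace $v$ by adjacent new vertices $v_1,v_2$ with $v_i$ adjacent to $N_i$. An expansion of a graph is a graph obtained from it by a (possibly empty) sequence of splits. A non-trivial separation $(A,B)$ of $G$ of order three is degenerate if the vertices of $A\cap B$ can be numbered $v_1,v_2,v_3$ so that either (1) $|A-B|=1$ and $A\cap B$ is independent, or (2) there is a triangle $u_1u_2u_3$ in $G[A]$ such that for $i=1,2,3$, $u_i$ and $v_i$ are adjacent or equal, $A\subseteq\{u_1,u_2,u_3,v_1,v_2,v_3\}$, and every edge of $G[A]$ is of the form $u_iv_i$ or $u_iu_j$. *)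

theory Defs
  imports Main
begin

definition graph :: "'a set \<Rightarrow> 'a set set \<Rightarrow> bool" where
  "graph V E \<longleftrightarrow> finite V \<and> (\<forall>e\<in>E. e \<subseteq> V \<and> card e = 2)"

definition adj :: "'a set set \<Rightarrow> 'a \<Rightarrow> 'a \<Rightarrow> bool" where
  "adj E u v \<longleftrightarrow> {u, v} \<in> E"

definition nbrs :: "'a set set \<Rightarrow> 'a \<Rightarrow> 'a set" where
  "nbrs E v = {u. adj E v u}"

definition edges_in :: "'a set set \<Rightarrow> 'a set \<Rightarrow> nat" where
  "edges_in E A = card {e\<in>E. e \<subseteq> A}"

definition separation :: "'a set \<Rightarrow> 'a set set \<Rightarrow> 'a set \<Rightarrow> 'a set \<Rightarrow> bool" where
  "separation V E A B \<longleftrightarrow> A \<union> B = V \<and>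
     (\<forall>x\<in>A - B. \<forall>y\<in>B - A. \<not> adj E x y)"

definition sep_order :: "'a set \<Rightarrow> 'a set \<Rightarrow> nat" where
  "sep_order A B = card (A \<inter> B)"

definition nontrivial_sep :: "'a set \<Rightarrow> 'a set \<Rightarrow> 'a set \<Rightarrow> bool" where
  "nontrivial_sep V A B \<longleftrightarrow> A \<noteq> V \<and> B \<noteq> V"

definition three_connected :: "'a set \<Rightarrow> 'a set set \<Rightarrow> bool" where
  "three_connected V E \<longleftrightarrow> graph V E \<and> card V \<ge> 4 \<and>
     (\<forall>A B. separation V E A B \<and> nontrivial_sep V A B \<longrightarrow> sep_order A B \<ge> 3)"

definition weakly_4_connected :: "'a set \<Rightarrow> 'a set set \<Rightarrow> bool" where
  "weakly_4_connected V E \<longleftrightarrow> three_connected V E \<and> card V \<ge> 5 \<and>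
     (\<forall>A B. separation V E A B \<and> sep_order A B \<le> 3 \<longrightarrow>
        edges_in E A \<le> 4 \<or> edges_in E B \<le> 4)"

text \<open>Prism: exactly six vertices, complement is a 6-cycle.\<close>
definition prism :: "'a set \<Rightarrow> 'a set set \<Rightarrow> bool" where
  "prism V E \<longleftrightarrow> graph V E \<and> card V = 6 \<and>
     (\<exists>f :: nat \<Rightarrow> 'a. bij_betw f {0..<6} V \<and>
        (\<forall>i<6. \<forall>j<6. i \<noteq> j \<longrightarrow>
           (\<not> adj E (f i) (f j) \<longleftrightarrow> (j = (i + 1) mod 6 \<or> i = (j + 1) mod 6))))"

definition split_step :: "'a set \<Rightarrow> 'a set set \<Rightarrow> 'a set \<Rightarrow> 'a set set \<Rightarrow> bool" where
  "split_step V E V' E' \<longleftrightarrow> (\<exists>v N1 N2 v1 v2.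
     v \<in> V \<and> card (nbrs E v) \<ge> 4 \<and>
     N1 \<union> N2 = nbrs E v \<and> N1 \<inter> N2 = {} \<and> card N1 \<ge> 2 \<and> card N2 \<ge> 2 \<and>
     v1 \<noteq> v2 \<and> v1 \<notin> V - {v} \<and> v2 \<notin> V - {v} \<and>
     V' = (V - {v}) \<union> {v1, v2} \<and>
     E' = {e\<in>E. v \<notin> e} \<union> {{v1, v2}} \<union> {{v1, u} | u. u \<in> N1} \<union> {{v2, u} | u. u \<in> N2})"

definition expansion :: "'a set \<Rightarrow> 'a set set \<Rightarrow> 'a set \<Rightarrow> 'a set set \<Rightarrow> bool" where
  "expansion V E V' E' \<longleftrightarrow>
     (\<lambda>(X, F) (Y, H). split_step X F Y H)\<^sup>*\<^sup>* (V, E) (V', E')"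

definition degenerate :: "'a set \<Rightarrow> 'a set set \<Rightarrow> 'a set \<Rightarrow> 'a set \<Rightarrow> bool" where
  "degenerate V E A B \<longleftrightarrow> separation V E A B \<and> nontrivial_sep V A B \<and> sep_order A B = 3 \<and>
    (\<exists>v1 v2 v3. A \<inter> B = {v1, v2, v3} \<and> v1 \<noteq> v2 \<and> v1 \<noteq> v3 \<and> v2 \<noteq> v3 \<and>
      ((card (A - B) = 1 \<and> (\<forall>x\<in>A \<inter> B. \<forall>y\<in>A \<inter> B. \<not> adj E x y)) \<or>
       (\<exists>u1 u2 u3. u1 \<in> A \<and> u2 \<in> A \<and> u3 \<in> A \<and>
          adj E u1 u2 \<and> adj E u2 u3 \<and> adj E u1 u3 \<and>
          (u1 = v1 \<or> adj E u1 v1) \<and> (u2 = v2 \<or> adj E u2 v2) \<and> (u3 = v3 \<or> adj E u3 v3) \<and>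
          A \<subseteq> {u1, u2, u3, v1, v2, v3} \<and>
          (\<forall>e\<in>E. e \<subseteq> A \<longrightarrow>
             e \<in> {{u1, v1}, {u2, v2}, {u3, v3}, {u1, u2}, {u2, u3}, {u1, u3}}))))"

end

theory Submission
  imports Defs
begin

text \<open>Call a side A of a separation (A, B) thin if G[A] has at most |A - B| + 3 edges, as every
  degenerate side does. In a 3-connected graph a double count of degrees (all of them at least 3)
  shows that the two sides of a nontrivial separation of order three are never both thin, that a
  thin side has |A - B| \<le> 3, and, inspecting these three cases, that a thin side is degenerate.
  It therefore suffices that every expansion G of a weakly 4-connected graph is 3-connected and
  that every nontrivial separation of order three of G has a thin side. Weakly 4-connected graphs
  have this property, since a side with at most four edges is thin, and it survives a split:
  contracting the new edge maps a separation of the split graph to a separation of the original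
  graph of no larger order, and a thin side of the image lifts to a thin side; if instead a side
  is mapped onto the whole graph, the other side consists of one new vertex and its neighbours.\<close>

section \<open>Graphs and separations\<close>

lemma adj_commute: "adj E u v = adj E v u"
  by (simp add: adj_def insert_commute)

lemma adj_imp_neq: "graph V E \<Longrightarrow> adj E u v \<Longrightarrow> u \<noteq> v"
  unfolding graph_def adj_def by fastforce

lemma adj_imp_vertices: "graph V E \<Longrightarrow> adj E u v \<Longrightarrow> u \<in> V \<and> v \<in> V"
  unfolding graph_def adj_def by blast

lemma edge_doubleton: "graph V E \<Longrightarrow> e \<in> E \<Longrightarrow> \<exists>x y. x \<noteq> y \<and> e = {x, y}"
  unfolding graph_def by (metis card_2_iff)

lemma edge_nonempty: "graph V E \<Longrightarrow> e \<in> E \<Longrightarrow> e \<noteq> {}"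
  using edge_doubleton by blast

lemma edge_other_end:
  assumes "graph V E" "e \<in> E" "x \<in> e"
  shows "\<exists>y. y \<noteq> x \<and> e = {x, y}"
  using edge_doubleton[OF assms(1,2)] assms(3) by (metis insert_commute insertE singletonD)

lemma graph_finite_edges: "graph V E \<Longrightarrow> finite E"
  unfolding graph_def by (meson finite_Pow_iff finite_subset subsetI PowI)

lemma nbrs_subset: "graph V E \<Longrightarrow> nbrs E v \<subseteq> V - {v}"
  unfolding nbrs_def using adj_imp_vertices adj_imp_neq by fastforce

lemma card_image_doubleton: "card ((\<lambda>x. {a, x}) ` M) = card M"
  by (rule card_image) (auto simp: inj_on_def doubleton_eq_iff)

lemma card_3E:
  assumes "card X = 3"
  obtains x y z where "X = {x, y, z}" "x \<noteq> y" "x \<noteq> z" "y \<noteq> z"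
  using assms by (metis card_3_iff)

lemma edges_in_eq_0_iff:
  assumes g: "graph V E"
  shows "edges_in E X = 0 \<longleftrightarrow> (\<forall>e\<in>E. \<not> e \<subseteq> X)"
  using graph_finite_edges[OF g] unfolding edges_in_def by auto

lemma card_incident_edges:
  assumes g: "graph V E"
  shows "card {e\<in>E. s \<in> e} = card (nbrs E s)"
proof -
  have "{e\<in>E. s \<in> e} = (\<lambda>y. {s, y}) ` nbrs E s"
    using edge_other_end[OF g] unfolding nbrs_def adj_def by fastforce
  then show ?thesis by (simp add: card_image_doubleton)
qed

lemma card_nbrs_Int_singleton: "card (nbrs E a \<inter> {b}) = of_bool (adj E a b)"
  by (simp add: nbrs_def)

lemma card_nbrs_Int_doubleton:
  "card (nbrs E a \<inter> {b, c}) \<le> of_bool (adj E a b) + of_bool (adj E a c)"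
proof -
  have "nbrs E a \<inter> {b, c} = (nbrs E a \<inter> {b}) \<union> (nbrs E a \<inter> {c})" by auto
  then show ?thesis
    using card_Un_le[of "nbrs E a \<inter> {b}" "nbrs E a \<inter> {c}"] by (simp add: card_nbrs_Int_singleton)
qed

lemma edges_in_doubleton_ge: "of_bool (adj E a b) \<le> edges_in E {a, b}"
proof (cases "adj E a b")
  case True
  have "{{a, b}} \<subseteq> {e\<in>E. e \<subseteq> {a, b}}" using True unfolding adj_def by auto
  moreover have "finite {e\<in>E. e \<subseteq> {a, b}}" by (rule finite_subset[of _ "Pow {a, b}"]) auto
  ultimately have "card {{a, b}} \<le> edges_in E {a, b}" unfolding edges_in_def by (rule card_mono[rotated])
  then show ?thesis using True by simp
qed simp

lemma edges_in_triple_ge: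
  assumes abc: "a \<noteq> b" "a \<noteq> c" "b \<noteq> c"
  shows "of_bool (adj E a b) + of_bool (adj E a c) + of_bool (adj E b c) \<le> edges_in E {a, b, c}"
proof -
  define P where "P x y = (if adj E x y then {{x, y}} else {})" for x y
  have card_P: "card (P x y) = of_bool (adj E x y)" for x y unfolding P_def by simp
  have fin: "finite (P x y)" for x y unfolding P_def by simp
  have "P a b \<inter> P a c = {}" "(P a b \<union> P a c) \<inter> P b c = {}"
    using abc unfolding P_def by (simp_all add: doubleton_eq_iff)
  then have "card (P a b \<union> P a c \<union> P b c) = card (P a b) + card (P a c) + card (P b c)"
    using card_Un_disjoint[OF finite_UnI[OF fin fin] fin] card_Un_disjoint[OF fin fin] by presburger
  moreover have "P a b \<union> P a c \<union> P b c \<subseteq> {e\<in>E. e \<subseteq> {a, b, c}}"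
    unfolding P_def adj_def by auto
  moreover have "finite {e\<in>E. e \<subseteq> {a, b, c}}"
    by (rule finite_subset[of _ "Pow {a, b, c}"]) auto
  ultimately show ?thesis
    unfolding edges_in_def card_P by (metis card_mono)
qed

lemma edges_in_decomp_ge:
  assumes g: "graph V E" and fA: "finite A"
  shows "edges_in E (A - B) + (\<Sum>s\<in>A - B. card (nbrs E s \<inter> (A \<inter> B))) + edges_in E (A \<inter> B)
           \<le> edges_in E A"
proof -
  let ?X = "A \<inter> B"
  let ?P = "{e\<in>E. e \<subseteq> A - B}" and ?Q = "{e\<in>E. e \<subseteq> ?X}"
  define C where "C s = (\<lambda>x. {s, x}) ` (nbrs E s \<inter> ?X)" for s
  have fE: "finite E" using graph_finite_edges[OF g] .
  have fC: "finite (\<Union>s\<in>A - B. C s)" using fA unfolding C_def by simp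
  have "\<forall>s\<in>A - B. \<forall>t\<in>A - B. s \<noteq> t \<longrightarrow> C s \<inter> C t = {}"
    unfolding C_def by (auto simp: doubleton_eq_iff)
  then have "card (\<Union>s\<in>A - B. C s) = (\<Sum>s\<in>A - B. card (C s))"
    using fA unfolding C_def by (intro card_UN_disjoint) auto
  then have card_C: "card (\<Union>s\<in>A - B. C s) = (\<Sum>s\<in>A - B. card (nbrs E s \<inter> ?X))"
    unfolding C_def by (simp add: card_image_doubleton)
  have "?P \<inter> (\<Union>s\<in>A - B. C s) = {}" unfolding C_def by auto
  moreover have "(?P \<union> (\<Union>s\<in>A - B. C s)) \<inter> ?Q = {}"
    using edge_nonempty[OF g] unfolding C_def by auto
  ultimately have "card (?P \<union> (\<Union>s\<in>A - B. C s) \<union> ?Q) = card ?P + card (\<Union>s\<in>A - B. C s) + card ?Q"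
    using fE fC by (simp add: card_Un_disjoint)
  moreover have "?P \<union> (\<Union>s\<in>A - B. C s) \<union> ?Q \<subseteq> {e\<in>E. e \<subseteq> A}"
    unfolding C_def nbrs_def adj_def by auto
  then have "card (?P \<union> (\<Union>s\<in>A - B. C s) \<union> ?Q) \<le> edges_in E A"
    unfolding edges_in_def by (rule card_mono[rotated]) (use fE in simp)
  ultimately show ?thesis
    unfolding edges_in_def card_C[symmetric] by linarith
qed

lemma separation_Un: "separation V E A B \<Longrightarrow> A \<union> B = V"
  unfolding separation_def by simp

lemma separation_subset: "separation V E A B \<Longrightarrow> A \<subseteq> V \<and> B \<subseteq> V"
  unfolding separation_def by blast

lemma separation_no_adj: "separation V E A B \<Longrightarrow> x \<in> A - B \<Longrightarrow> y \<in> B - A \<Longrightarrow> \<not> adj E x y"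
  unfolding separation_def by simp

lemma separation_swap: "separation V E A B \<Longrightarrow> separation V E B A"
  unfolding separation_def by (metis Un_commute adj_commute)

lemma nontrivial_sep_swap: "nontrivial_sep V A B \<Longrightarrow> nontrivial_sep V B A"
  unfolding nontrivial_sep_def by simp

lemma nontrivial_sep_diff_nonempty:
  "separation V E A B \<Longrightarrow> nontrivial_sep V A B \<Longrightarrow> A - B \<noteq> {} \<and> B - A \<noteq> {}"
  unfolding separation_def nontrivial_sep_def by (metis Diff_eq_empty_iff Un_absorb1 Un_absorb2)

lemma separation_nbrs_subset:
  assumes g: "graph V E" and sep: "separation V E A B" and s: "s \<in> A - B"
  shows "nbrs E s \<subseteq> A - {s}"
proof
  fix y assume y: "y \<in> nbrs E s"
  then have "y \<in> V - {s}" using nbrs_subset[OF g] by blast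
  moreover have "y \<notin> B - A" using y separation_no_adj[OF sep s] unfolding nbrs_def by blast
  ultimately show "y \<in> A - {s}" using separation_Un[OF sep] by blast
qed

lemma edge_within_side:
  assumes g: "graph V E" and sep: "separation V E A B" and e: "e \<in> E"
  shows "e \<subseteq> A \<or> e \<subseteq> B"
proof -
  obtain p q where pq: "e = {p, q}" using edge_doubleton[OF g e] by blast
  then have "adj E p q" "adj E q p" using e unfolding adj_def by (auto simp: insert_commute)
  moreover have "p \<in> A \<union> B" "q \<in> A \<union> B"
    using adj_imp_vertices[OF g] calculation separation_Un[OF sep] by blast+
  ultimately show ?thesis using separation_no_adj[OF sep] pq by blast
qed

lemma edge_in_side_cases:
  assumes g: "graph V E" and sep: "separation V E A B" and e: "e \<in> E" "e \<subseteq> A"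
  shows "e \<subseteq> A \<inter> B \<or> (\<exists>s\<in>A - B. \<exists>w\<in>nbrs E s. e = {s, w})"
proof (cases "e \<subseteq> B")
  case False
  then obtain s where s: "s \<in> e" "s \<in> A - B" using e by blast
  obtain w where "e = {s, w}" using edge_other_end[OF g e(1) s(1)] by blast
  then show ?thesis using s e unfolding nbrs_def adj_def by blast
qed (use e in blast)

lemma three_connected_graph: "three_connected V E \<Longrightarrow> graph V E"
  unfolding three_connected_def by simp

lemma three_connected_sep_order:
  "three_connected V E \<Longrightarrow> separation V E A B \<Longrightarrow> nontrivial_sep V A B \<Longrightarrow> 3 \<le> card (A \<inter> B)"
  unfolding three_connected_def sep_order_def by blast

lemma three_connected_degree:
  assumes tc: "three_connected V E" and v: "v \<in> V"
  shows "3 \<le> card (nbrs E v)"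
proof (rule ccontr)
  assume c: "\<not> 3 \<le> card (nbrs E v)"
  have g: "graph V E" using three_connected_graph[OF tc] .
  let ?A = "insert v (nbrs E v)" and ?B = "V - {v}"
  have NV: "nbrs E v \<subseteq> V - {v}" using nbrs_subset[OF g] .
  have fN: "finite (nbrs E v)" using NV g unfolding graph_def by (meson finite_Diff finite_subset)
  have sep: "separation V E ?A ?B"
    using v NV unfolding separation_def nbrs_def by auto
  have "card ?A \<le> 3" using c fN by (simp add: card_insert_if)
  moreover have "card V \<ge> 4" using tc unfolding three_connected_def by simp
  ultimately have "nontrivial_sep V ?A ?B" unfolding nontrivial_sep_def using v by auto
  moreover have "?A \<inter> ?B = nbrs E v" using NV by auto
  ultimately show False using three_connected_sep_order[OF tc sep] c by simp
qed

lemma three_connected_separator_nbr: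
  assumes tc: "three_connected V E" and sep: "separation V E A B" and nt: "nontrivial_sep V A B"
    and o3: "card (A \<inter> B) = 3" and x: "x \<in> A \<inter> B"
  shows "\<exists>s\<in>A - B. adj E x s"
proof (rule ccontr)
  assume c: "\<not> (\<exists>s\<in>A - B. adj E x s)"
  have "(A - {x}) \<inter> B = (A \<inter> B) - {x}" by blast
  then have "card ((A - {x}) \<inter> B) = 2"
    using o3 x by (simp add: card_Diff_singleton)
  moreover have "separation V E (A - {x}) B"
    using sep c x unfolding separation_def by (auto simp: adj_commute)
  moreover have "nontrivial_sep V (A - {x}) B"
    using nt separation_subset[OF sep] unfolding nontrivial_sep_def by blast
  ultimately show False using three_connected_sep_order[OF tc, of "A - {x}" B] by simp
qed

section \<open>Thin sides\<close>

definition degree_in :: "'a set set \<Rightarrow> 'a set \<Rightarrow> 'a \<Rightarrow> nat" where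
  "degree_in E A x = card {e\<in>E. e \<subseteq> A \<and> x \<in> e}"

definition thin :: "'a set set \<Rightarrow> 'a set \<Rightarrow> 'a set \<Rightarrow> bool" where
  "thin E A B \<longleftrightarrow> edges_in E A \<le> card (A - B) + 3"

lemma sum_card_incident:
  assumes "finite F" "finite S"
  shows "(\<Sum>s\<in>S. card {e\<in>F. s \<in> e}) = (\<Sum>e\<in>F. card (e \<inter> S))"
proof -
  have "(\<Sum>s\<in>S. card {e\<in>F. s \<in> e}) = (\<Sum>s\<in>S. \<Sum>e\<in>F. if s \<in> e then 1 else 0)"
    using assms by (simp add: sum.If_cases Int_def)
  also have "\<dots> = (\<Sum>e\<in>F. \<Sum>s\<in>S. if s \<in> e then 1 else 0)" by (rule sum.swap)
  also have "\<dots> = (\<Sum>e\<in>F. card (e \<inter> S))"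
    using assms by (simp add: sum.If_cases Int_commute)
  finally show ?thesis .
qed

lemma degree_in_interior:
  assumes g: "graph V E" and sep: "separation V E A B" and s: "s \<in> A - B"
  shows "degree_in E A s = card (nbrs E s)"
proof -
  have "{e\<in>E. e \<subseteq> A \<and> s \<in> e} = {e\<in>E. s \<in> e}"
    using edge_within_side[OF g sep] s by blast
  then show ?thesis unfolding degree_in_def using card_incident_edges[OF g] by simp
qed

text \<open>Double counting the ends of the edges of G[A]; vertices of A - B have all their neighbours
  in A.\<close>
lemma degree_sum_le_edges_in:
  assumes tc: "three_connected V E" and sep: "separation V E A B"
  shows "3 * card (A - B) + (\<Sum>x\<in>A \<inter> B. degree_in E A x) \<le> 2 * edges_in E A"
proof -
  have g: "graph V E" using three_connected_graph[OF tc] .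
  define F where "F = {e\<in>E. e \<subseteq> A}"
  have fF: "finite F" unfolding F_def using graph_finite_edges[OF g] by simp
  have fA: "finite A" using separation_subset[OF sep] g unfolding graph_def by (meson finite_subset)
  have deg: "degree_in E A x = card {e\<in>F. x \<in> e}" for x
    unfolding degree_in_def F_def by (rule arg_cong[where f = card]) blast
  have two: "card (e \<inter> (A - B)) + card (e \<inter> (A \<inter> B)) = 2" if "e \<in> F" for e
  proof -
    have "e \<subseteq> A" "card e = 2" using that g unfolding F_def graph_def by auto
    moreover have "finite e" using \<open>card e = 2\<close> card.infinite by fastforce
    moreover have "e = (e \<inter> (A - B)) \<union> (e \<inter> (A \<inter> B))" using \<open>e \<subseteq> A\<close> by blast
    ultimately show ?thesis
      using card_Un_disjoint[of "e \<inter> (A - B)" "e \<inter> (A \<inter> B)"] by auto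
  qed
  have "(\<Sum>x\<in>A - B. degree_in E A x) + (\<Sum>x\<in>A \<inter> B. degree_in E A x) = 2 * card F"
    using sum_card_incident[OF fF, of "A - B"] sum_card_incident[OF fF, of "A \<inter> B"] fA two
    unfolding deg by (simp add: sum.distrib[symmetric])
  moreover have "3 * card (A - B) \<le> (\<Sum>x\<in>A - B. degree_in E A x)"
  proof -
    have "3 \<le> degree_in E A x" if "x \<in> A - B" for x
      using degree_in_interior[OF g sep that] three_connected_degree[OF tc] separation_subset[OF sep] that
      by auto
    then show ?thesis using sum_mono[of "A - B" "\<lambda>_. 3" "degree_in E A"] by (simp add: mult.commute)
  qed
  ultimately show ?thesis unfolding edges_in_def F_def by linarith
qed

lemma degree_in_separator_ge:
  assumes tc: "three_connected V E" and sep: "separation V E A B" and nt: "nontrivial_sep V A B"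
    and o3: "card (A \<inter> B) = 3" and x: "x \<in> A \<inter> B"
  shows "1 \<le> degree_in E A x"
proof -
  obtain s where s: "s \<in> A - B" "adj E x s"
    using three_connected_separator_nbr[OF tc sep nt o3 x] by blast
  then have "{x, s} \<in> {e\<in>E. e \<subseteq> A \<and> x \<in> e}" using x unfolding adj_def by auto
  moreover have "finite {e\<in>E. e \<subseteq> A \<and> x \<in> e}"
    using graph_finite_edges[OF three_connected_graph[OF tc]] by simp
  ultimately show ?thesis unfolding degree_in_def by (metis One_nat_def Suc_leI card_gt_0_iff empty_iff)
qed

lemma thin_card_diff_le:
  assumes tc: "three_connected V E" and sep: "separation V E A B" and nt: "nontrivial_sep V A B"
    and o3: "card (A \<inter> B) = 3" and th: "thin E A B"
  shows "card (A - B) \<le> 3"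
proof -
  have "(\<Sum>x\<in>A \<inter> B. 1) \<le> (\<Sum>x\<in>A \<inter> B. degree_in E A x)"
    by (rule sum_mono) (rule degree_in_separator_ge[OF tc sep nt o3])
  then show ?thesis
    using degree_sum_le_edges_in[OF tc sep] th o3 unfolding thin_def by simp
qed

lemma degree_in_le:
  assumes g: "graph V E" and fA: "finite A" and x: "x \<in> A \<inter> B"
  shows "degree_in E A x \<le> degree_in E (A \<inter> B) x + card (A - B)"
proof -
  have "{e\<in>E. e \<subseteq> A \<and> x \<in> e} \<subseteq> {e\<in>E. e \<subseteq> A \<inter> B \<and> x \<in> e} \<union> (\<lambda>s. {x, s}) ` (A - B)"
  proof
    fix e assume e: "e \<in> {e\<in>E. e \<subseteq> A \<and> x \<in> e}"
    then obtain y where y: "e = {x, y}" using edge_other_end[OF g] by blast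
    show "e \<in> {e\<in>E. e \<subseteq> A \<inter> B \<and> x \<in> e} \<union> (\<lambda>s. {x, s}) ` (A - B)"
    proof (cases "y \<in> B")
      case True then show ?thesis using e x y by auto
    next
      case False then show ?thesis using e y by auto
    qed
  qed
  then have "degree_in E A x \<le> card ({e\<in>E. e \<subseteq> A \<inter> B \<and> x \<in> e} \<union> (\<lambda>s. {x, s}) ` (A - B))"
    unfolding degree_in_def by (rule card_mono[rotated]) (use graph_finite_edges[OF g] fA in simp)
  also have "\<dots> \<le> degree_in E (A \<inter> B) x + card ((\<lambda>s. {x, s}) ` (A - B))"
    unfolding degree_in_def by (rule card_Un_le)
  also have "\<dots> = degree_in E (A \<inter> B) x + card (A - B)"
    by (simp add: card_image_doubleton)
  finally show ?thesis .
qed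

lemma degree_in_separator_split:
  assumes g: "graph V E" and sep: "separation V E A B"
  shows "card (nbrs E x) + degree_in E (A \<inter> B) x = degree_in E A x + degree_in E B x"
proof -
  let ?PA = "{e\<in>E. e \<subseteq> A \<and> x \<in> e}" and ?PB = "{e\<in>E. e \<subseteq> B \<and> x \<in> e}"
  have "{e\<in>E. x \<in> e} = ?PA \<union> ?PB" using edge_within_side[OF g sep] by blast
  moreover have "{e\<in>E. e \<subseteq> A \<inter> B \<and> x \<in> e} = ?PA \<inter> ?PB" by blast
  moreover have "card ?PA + card ?PB = card (?PA \<union> ?PB) + card (?PA \<inter> ?PB)"
    by (rule card_Un_Int) (use graph_finite_edges[OF g] in simp)+
  ultimately show ?thesis
    unfolding degree_in_def card_incident_edges[OF g, symmetric] by simp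
qed

text \<open>As the separator vertices have degree at least 3, their degrees into the two sides add up to
  at least 9 plus their degrees inside A \<inter> B; for two thin sides this sum is too small.\<close>
lemma not_thin_both:
  assumes tc: "three_connected V E" and sep: "separation V E A B" and nt: "nontrivial_sep V A B"
    and o3: "card (A \<inter> B) = 3"
  shows "\<not> (thin E A B \<and> thin E B A)"
proof
  assume th: "thin E A B \<and> thin E B A"
  have g: "graph V E" using three_connected_graph[OF tc] .
  have fA: "finite A" and fB: "finite B"
    using separation_subset[OF sep] g unfolding graph_def by (meson finite_subset)+
  let ?X = "A \<inter> B"
  define k where "k = card (A - B)"
  define k' where "k' = card (B - A)"
  define TA where "TA = (\<Sum>x\<in>?X. degree_in E A x)"
  define TB where "TB = (\<Sum>x\<in>?X. degree_in E B x)"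
  define TX where "TX = (\<Sum>x\<in>?X. degree_in E ?X x)"
  have k1: "1 \<le> k" "1 \<le> k'"
    using nontrivial_sep_diff_nonempty[OF sep nt] fA fB unfolding k_def k'_def
    by (simp_all add: Suc_le_eq card_gt_0_iff)
  have "(\<Sum>x\<in>?X. 3 + degree_in E ?X x) \<le> (\<Sum>x\<in>?X. degree_in E A x + degree_in E B x)"
    using degree_in_separator_split[OF g sep] three_connected_degree[OF tc] separation_subset[OF sep]
    by (intro sum_mono) (metis IntD1 add_le_mono1 subset_iff)
  then have sum_X: "9 + TX \<le> TA + TB" unfolding TA_def TB_def TX_def using o3 by (simp add: sum.distrib)
  have "TA \<le> (\<Sum>x\<in>?X. degree_in E ?X x + k)"
    unfolding TA_def k_def by (rule sum_mono) (rule degree_in_le[OF g fA])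
  then have TA_X: "TA \<le> TX + 3 * k" unfolding TX_def using o3 by (simp add: sum.distrib)
  have "TB \<le> (\<Sum>x\<in>?X. degree_in E ?X x + k')"
    unfolding TB_def k'_def by (rule sum_mono) (use degree_in_le[OF g fB, of _ A] in \<open>simp add: Int_commute\<close>)
  then have TB_X: "TB \<le> TX + 3 * k'" unfolding TX_def using o3 by (simp add: sum.distrib)
  have TA_k: "3 * k + TA \<le> 2 * k + 6"
    using degree_sum_le_edges_in[OF tc sep] th unfolding TA_def k_def thin_def by linarith
  have TB_k: "3 * k' + TB \<le> 2 * k' + 6"
    using degree_sum_le_edges_in[OF tc separation_swap[OF sep]] th
    unfolding TB_def k'_def thin_def by (simp add: Int_commute)
  have "TX \<le> 1" using sum_X TA_k TB_k k1 by linarith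
  then have "TA \<le> 4" "TB \<le> 4"
    using TA_X TB_X TA_k TB_k by (cases "k = 1"; cases "k' = 1"; linarith)+
  then show False using sum_X by linarith
qed

section \<open>Degenerate sides are the thin sides\<close>

lemma degenerateE:
  assumes "degenerate V E A B"
  obtains (independent) v1 v2 v3 where "A \<inter> B = {v1, v2, v3}" "card (A - B) = 1"
      "\<forall>x\<in>A \<inter> B. \<forall>y\<in>A \<inter> B. \<not> adj E x y"
  | (triangle) v1 v2 v3 u1 u2 u3 where "A \<inter> B = {v1, v2, v3}" "v1 \<noteq> v2" "v1 \<noteq> v3" "v2 \<noteq> v3"
      "u1 \<in> A" "u2 \<in> A" "u3 \<in> A" "adj E u1 u2" "adj E u2 u3" "adj E u1 u3"
      "A \<subseteq> {u1, u2, u3, v1, v2, v3}"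
      "\<forall>e\<in>E. e \<subseteq> A \<longrightarrow> e \<in> {{u1, v1}, {u2, v2}, {u3, v3}, {u1, u2}, {u2, u3}, {u1, u3}}"
proof -
  obtain v1 v2 v3 where X: "A \<inter> B = {v1, v2, v3}" "v1 \<noteq> v2" "v1 \<noteq> v3" "v2 \<noteq> v3"
    and cases: "(card (A - B) = 1 \<and> (\<forall>x\<in>A \<inter> B. \<forall>y\<in>A \<inter> B. \<not> adj E x y)) \<or>
       (\<exists>u1 u2 u3. u1 \<in> A \<and> u2 \<in> A \<and> u3 \<in> A \<and>
          adj E u1 u2 \<and> adj E u2 u3 \<and> adj E u1 u3 \<and>
          (u1 = v1 \<or> adj E u1 v1) \<and> (u2 = v2 \<or> adj E u2 v2) \<and> (u3 = v3 \<or> adj E u3 v3) \<and>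
          A \<subseteq> {u1, u2, u3, v1, v2, v3} \<and>
          (\<forall>e\<in>E. e \<subseteq> A \<longrightarrow> e \<in> {{u1, v1}, {u2, v2}, {u3, v3}, {u1, u2}, {u2, u3}, {u1, u3}}))"
    using assms unfolding degenerate_def by (elim conjE exE) (rule that)
  show thesis
  proof (cases "card (A - B) = 1 \<and> (\<forall>x\<in>A \<inter> B. \<forall>y\<in>A \<inter> B. \<not> adj E x y)")
    case True
    then show thesis by (intro independent[OF X(1)]) simp_all
  next
    case False
    then obtain u1 u2 u3 where "u1 \<in> A" "u2 \<in> A" "u3 \<in> A" "adj E u1 u2" "adj E u2 u3" "adj E u1 u3"
      "A \<subseteq> {u1, u2, u3, v1, v2, v3}"
      "\<forall>e\<in>E. e \<subseteq> A \<longrightarrow> e \<in> {{u1, v1}, {u2, v2}, {u3, v3}, {u1, u2}, {u2, u3}, {u1, u3}}"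
      using cases False by (elim disjE exE conjE) simp_all
    then show thesis by (rule triangle[OF X])
  qed
qed

lemma degenerate_independentI:
  assumes "separation V E A B" "nontrivial_sep V A B"
    "A \<inter> B = {v1, v2, v3}" "v1 \<noteq> v2" "v1 \<noteq> v3" "v2 \<noteq> v3"
    "card (A - B) = 1" "\<forall>x\<in>A \<inter> B. \<forall>y\<in>A \<inter> B. \<not> adj E x y"
  shows "degenerate V E A B"
proof -
  have o3: "sep_order A B = 3" unfolding sep_order_def using assms(3-6) by simp
  show ?thesis
    unfolding degenerate_def
    by (intro conjI assms(1,2) o3, rule exI[of _ v1], rule exI[of _ v2], rule exI[of _ v3])
      (simp add: assms(3-8))
qed

lemma degenerate_triangleI:
  assumes "separation V E A B" "nontrivial_sep V A B"
    "A \<inter> B = {v1, v2, v3}" "v1 \<noteq> v2" "v1 \<noteq> v3" "v2 \<noteq> v3"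
    "u1 \<in> A" "u2 \<in> A" "u3 \<in> A" "adj E u1 u2" "adj E u2 u3" "adj E u1 u3"
    "u1 = v1 \<or> adj E u1 v1" "u2 = v2 \<or> adj E u2 v2" "u3 = v3 \<or> adj E u3 v3"
    "A \<subseteq> {u1, u2, u3, v1, v2, v3}"
    "\<forall>e\<in>E. e \<subseteq> A \<longrightarrow> e \<in> {{u1, v1}, {u2, v2}, {u3, v3}, {u1, u2}, {u2, u3}, {u1, u3}}"
  shows "degenerate V E A B"
proof -
  have o3: "sep_order A B = 3" unfolding sep_order_def using assms(3-6) by simp
  show ?thesis
    unfolding degenerate_def
    by (intro conjI assms(1,2) o3, rule exI[of _ v1], rule exI[of _ v2], rule exI[of _ v3],
        intro conjI assms(3-6) disjI2, rule exI[of _ u1], rule exI[of _ u2], rule exI[of _ u3],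
        intro conjI; rule assms)
qed

lemma edges_in_independent_side_le:
  assumes g: "graph V E" and fA: "finite A" and a: "A - B = {a}"
    and ind: "\<forall>x\<in>A \<inter> B. \<forall>y\<in>A \<inter> B. \<not> adj E x y"
  shows "edges_in E A \<le> card (A \<inter> B)"
proof -
  have "{e\<in>E. e \<subseteq> A} \<subseteq> (\<lambda>x. {a, x}) ` (A \<inter> B)"
  proof
    fix e assume e: "e \<in> {e\<in>E. e \<subseteq> A}"
    then obtain x y where xy: "e = {x, y}" using edge_doubleton[OF g] by blast
    have xy_adj: "adj E x y" using e xy unfolding adj_def by simp
    have xyA: "x \<in> A" "y \<in> A" using e xy by auto
    have "x \<noteq> y" using adj_imp_neq[OF g xy_adj] .
    consider "x \<notin> B" | "y \<notin> B" using ind xy_adj xyA by blast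
    then show "e \<in> (\<lambda>x. {a, x}) ` (A \<inter> B)"
    proof cases
      case 1
      then have "x = a" using a xyA by blast
      then have "y \<in> A \<inter> B" using a xyA \<open>x \<noteq> y\<close> by (metis DiffI IntI singletonD)
      then show ?thesis using xy \<open>x = a\<close> by blast
    next
      case 2
      then have "y = a" using a xyA by blast
      then have "x \<in> A \<inter> B" using a xyA \<open>x \<noteq> y\<close> by (metis DiffI IntI singletonD)
      then show ?thesis using xy \<open>y = a\<close> by (simp add: insert_commute)
    qed
  qed
  then have "edges_in E A \<le> card ((\<lambda>x. {a, x}) ` (A \<inter> B))"
    unfolding edges_in_def by (rule card_mono[rotated]) (use fA in simp)
  then show ?thesis by (simp add: card_image_doubleton)
qed

lemma edges_in_triangle_side_le:
  assumes g: "graph V E" and fA: "finite A" and X: "A \<inter> B = {v1, v2, v3}" "v1 \<noteq> v2" "v1 \<noteq> v3" "v2 \<noteq> v3"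
    and u: "u1 \<in> A" "u2 \<in> A" "u3 \<in> A" "adj E u1 u2" "adj E u2 u3" "adj E u1 u3"
    and ed: "\<forall>e\<in>E. e \<subseteq> A \<longrightarrow> e \<in> {{u1, v1}, {u2, v2}, {u3, v3}, {u1, u2}, {u2, u3}, {u1, u3}}"
  shows "edges_in E A \<le> card (A - B) + 3"
proof -
  let ?U = "{u1, u2, u3}" and ?T = "{{u1, u2}, {u2, u3}, {u1, u3}}"
  define pendant where "pendant x = (if x = v1 then {u1, v1} else if x = v2 then {u2, v2} else {u3, v3})" for x
  have p1: "{u1, v1} \<in> pendant ` (A \<inter> B - ?U)" if "{u1, v1} \<notin> ?T" "card {u1, v1} = 2"
  proof -
    have "v1 \<notin> ?U" using that by (auto simp: insert_commute)
    then show ?thesis using X unfolding pendant_def by (intro image_eqI[of _ _ v1]) auto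
  qed
  have p2: "{u2, v2} \<in> pendant ` (A \<inter> B - ?U)" if "{u2, v2} \<notin> ?T" "card {u2, v2} = 2"
  proof -
    have "v2 \<notin> ?U" using that by (auto simp: insert_commute)
    then show ?thesis using X unfolding pendant_def by (intro image_eqI[of _ _ v2]) auto
  qed
  have p3: "{u3, v3} \<in> pendant ` (A \<inter> B - ?U)" if "{u3, v3} \<notin> ?T" "card {u3, v3} = 2"
  proof -
    have "v3 \<notin> ?U" using that by (auto simp: insert_commute)
    then show ?thesis using X unfolding pendant_def by (intro image_eqI[of _ _ v3]) auto
  qed
  have sub: "{e\<in>E. e \<subseteq> A} \<subseteq> ?T \<union> pendant ` (A \<inter> B - ?U)"
  proof
    fix e assume "e \<in> {e\<in>E. e \<subseteq> A}"
    then have e: "e \<in> E" "e \<subseteq> A" by simp_all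
    then have c2: "card e = 2" using g unfolding graph_def by auto
    have "e \<in> {{u1, v1}, {u2, v2}, {u3, v3}, {u1, u2}, {u2, u3}, {u1, u3}}"
      using bspec[OF ed e(1)] e(2) by (rule mp)
    then consider "e \<in> ?T" | "e = {u1, v1}" | "e = {u2, v2}" | "e = {u3, v3}"
      unfolding insert_iff empty_iff by argo
    then show "e \<in> ?T \<union> pendant ` (A \<inter> B - ?U)"
    proof cases
      case 1 then show ?thesis by (rule UnI1)
    next
      case 2
      show ?thesis
      proof (cases "e \<in> ?T")
        case False show ?thesis using p1[OF False[unfolded 2] c2[unfolded 2]] unfolding 2 by (rule UnI2)
      qed (rule UnI1)
    next
      case 3
      show ?thesis
      proof (cases "e \<in> ?T")
        case False show ?thesis using p2[OF False[unfolded 3] c2[unfolded 3]] unfolding 3 by (rule UnI2)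
      qed (rule UnI1)
    next
      case 4
      show ?thesis
      proof (cases "e \<in> ?T")
        case False show ?thesis using p3[OF False[unfolded 4] c2[unfolded 4]] unfolding 4 by (rule UnI2)
      qed (rule UnI1)
    qed
  qed
  have "card (A \<inter> B - ?U) \<le> card (A - B)"
  proof -
    have "card (A \<inter> B - ?U) = card (A \<inter> B) - card (A \<inter> B \<inter> ?U)"
      by (rule card_Diff_subset_Int) (simp add: X(1))
    also have "card (A \<inter> B) = card ?U"
      using X u(4-6) adj_imp_neq[OF g] by (simp add: card_insert_if)
    also have "A \<inter> B \<inter> ?U = ?U \<inter> (A \<inter> B)" by (rule Int_commute)
    also have "card ?U - card (?U \<inter> (A \<inter> B)) = card (?U - A \<inter> B)"
      by (rule card_Diff_subset_Int[symmetric]) simp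
    finally have "card (A \<inter> B - ?U) = card (?U - A \<inter> B)" .
    moreover have "?U - A \<inter> B \<subseteq> A - B" using u by auto
    ultimately show ?thesis using fA card_mono[of "A - B" "?U - A \<inter> B"] by simp
  qed
  have "edges_in E A \<le> card (?T \<union> pendant ` (A \<inter> B - ?U))"
    unfolding edges_in_def by (rule card_mono[OF _ sub]) (use X in simp)
  also have "\<dots> \<le> card ?T + card (pendant ` (A \<inter> B - ?U))" by (rule card_Un_le)
  also have "\<dots> \<le> card ?T + card (A \<inter> B - ?U)"
    using card_image_le[of "A \<inter> B - ?U" pendant] X by simp
  also have "card ?T \<le> 3" by (simp add: card_insert_if)
  finally show ?thesis using \<open>card (A \<inter> B - ?U) \<le> card (A - B)\<close> by linarith
qed

text \<open>Degenerate sides are thin: a triangle side carries its three triangle edges plus one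
  pendant edge for each separator vertex outside the triangle.\<close>
lemma degenerate_thin:
  assumes g: "graph V E" and d: "degenerate V E A B"
  shows "thin E A B"
proof -
  have fA: "finite A"
    using d separation_subset g unfolding degenerate_def graph_def by (meson finite_subset)
  from d show ?thesis
  proof (cases rule: degenerateE)
    case (independent v1 v2 v3)
    then obtain a where "A - B = {a}" by (meson card_1_singletonE)
    then have "edges_in E A \<le> card (A \<inter> B)"
      using edges_in_independent_side_le[OF g fA] independent(3) by blast
    moreover have "card (A \<inter> B) \<le> 3" unfolding independent(1) by (simp add: card_insert_if)
    ultimately show ?thesis unfolding thin_def by simp
  next
    case (triangle v1 v2 v3 u1 u2 u3)
    show ?thesis
      using edges_in_triangle_side_le[OF g fA triangle(1-10) triangle(12)] unfolding thin_def .
  qed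
qed

lemma three_connected_interior_degree:
  assumes tc: "three_connected V E" and sep: "separation V E A B" and s: "s \<in> A - B"
  shows "3 \<le> card (nbrs E s \<inter> (A \<inter> B)) + card (nbrs E s \<inter> (A - B - {s}))"
proof -
  have "nbrs E s = (nbrs E s \<inter> (A \<inter> B)) \<union> (nbrs E s \<inter> (A - B - {s}))"
    using separation_nbrs_subset[OF three_connected_graph[OF tc] sep s] by blast
  then have "card (nbrs E s) \<le> card (nbrs E s \<inter> (A \<inter> B)) + card (nbrs E s \<inter> (A - B - {s}))"
    using card_Un_le[of "nbrs E s \<inter> (A \<inter> B)" "nbrs E s \<inter> (A - B - {s})"] by simp
  moreover have "3 \<le> card (nbrs E s)"
    using three_connected_degree[OF tc] separation_subset[OF sep] s by blast
  ultimately show ?thesis by linarith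
qed

lemma separator_subset_interior_nbrs:
  assumes tc: "three_connected V E" and sep: "separation V E A B" and nt: "nontrivial_sep V A B"
    and o3: "card (A \<inter> B) = 3"
  shows "A \<inter> B \<subseteq> (\<Union>s\<in>A - B. nbrs E s)"
proof
  fix x assume "x \<in> A \<inter> B"
  then obtain s where "s \<in> A - B" "adj E x s" using three_connected_separator_nbr[OF tc sep nt o3] by blast
  then show "x \<in> (\<Union>s\<in>A - B. nbrs E s)" unfolding nbrs_def by (auto simp: adj_commute)
qed

lemma thin_single_vertex_side:
  assumes tc: "three_connected V E" and sep: "separation V E A B"
    and o3: "card (A \<inter> B) = 3" and th: "thin E A B" and k: "card (A - B) = 1"
  obtains a where "A - B = {a}" "nbrs E a = A \<inter> B" "edges_in E (A \<inter> B) \<le> 1"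
proof -
  have g: "graph V E" using three_connected_graph[OF tc] .
  have fA: "finite A" using separation_subset[OF sep] g unfolding graph_def by (meson finite_subset)
  obtain a where S: "A - B = {a}" using k by (meson card_1_singletonE)
  have "nbrs E a \<subseteq> A \<inter> B" using separation_nbrs_subset[OF g sep] S by blast
  moreover have "3 \<le> card (nbrs E a)"
    using three_connected_degree[OF tc] separation_subset[OF sep] S by blast
  ultimately have N: "nbrs E a = A \<inter> B" using o3 fA by (metis card_seteq finite_Int)
  have "(\<Sum>s\<in>A - B. card (nbrs E s \<inter> (A \<inter> B))) = card (nbrs E a \<inter> (A \<inter> B))" unfolding S by simp
  also have "\<dots> = 3" unfolding N using o3 by simp
  finally have "3 + edges_in E (A \<inter> B) \<le> edges_in E A" using edges_in_decomp_ge[OF g fA, of B] by linarith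
  moreover have "edges_in E A \<le> 4" using th k unfolding thin_def by simp
  ultimately show thesis using that S N by simp
qed

text \<open>The triangle is p q a: p and q serve as their own separator vertices, and the third separator
  vertex r is attached to a.\<close>
lemma degenerate_single_vertex_side_one_edgeI:
  assumes g: "graph V E" and sep: "separation V E A B" and nt: "nontrivial_sep V A B"
    and S: "A - B = {a}" and N: "nbrs E a = A \<inter> B" and o3: "card (A \<inter> B) = 3"
    and f: "{e\<in>E. e \<subseteq> A \<inter> B} = {f}"
  shows "degenerate V E A B"
proof -
  let ?X = "A \<inter> B"
  have "f \<in> {e\<in>E. e \<subseteq> ?X}" using f by simp
  then obtain p q where pq: "f = {p, q}" "p \<noteq> q" "f \<in> E" "f \<subseteq> ?X"
    using edge_doubleton[OF g] by blast
  have "card (?X - {p, q}) = 1" using o3 pq by (simp add: card_Diff_subset)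
  then obtain r where "?X - {p, q} = {r}" by (meson card_1_singletonE)
  then have r: "?X = {p, q, r}" "r \<noteq> p" "r \<noteq> q" using pq by auto
  have edges: "\<forall>e\<in>E. e \<subseteq> A \<longrightarrow> e \<in> {{p, p}, {q, q}, {a, r}, {p, q}, {q, a}, {p, a}}"
  proof (intro ballI impI)
    fix e assume e: "e \<in> E" "e \<subseteq> A"
    from edge_in_side_cases[OF g sep e] show "e \<in> {{p, p}, {q, q}, {a, r}, {p, q}, {q, a}, {p, a}}"
    proof
      assume "e \<subseteq> ?X"
      then have "e \<in> {e\<in>E. e \<subseteq> ?X}" using e by simp
      then show ?thesis using pq unfolding f by simp
    next
      assume "\<exists>s\<in>A - B. \<exists>w\<in>nbrs E s. e = {s, w}"
      then obtain s w where "s \<in> A - B" "w \<in> nbrs E s" "e = {s, w}" by blast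
      then have "w \<in> {p, q, r}" "e = {a, w}" using S N r by simp_all
      then show ?thesis by (auto simp: insert_commute)
    qed
  qed
  have adj_a: "adj E a x" if "x \<in> ?X" for x using N that unfolding nbrs_def by blast
  have "adj E p q" using pq unfolding adj_def by simp
  moreover have "adj E q a" "adj E p a" "a = r \<or> adj E a r"
    using adj_a[of p] adj_a[of q] adj_a[of r] r by (auto simp: adj_commute[of E _ a])
  moreover have "A \<subseteq> {p, q, a, p, q, r}" "p \<in> A" "q \<in> A" "a \<in> A" using S r by auto
  ultimately show ?thesis
    using degenerate_triangleI[OF sep nt r(1) pq(2) r(2)[symmetric] r(3)[symmetric], of p q a] edges
    by simp
qed

lemma thin_degenerate_card1:
  assumes tc: "three_connected V E" and sep: "separation V E A B" and nt: "nontrivial_sep V A B"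
    and o3: "card (A \<inter> B) = 3" and th: "thin E A B" and k: "card (A - B) = 1"
  shows "degenerate V E A B"
proof -
  have g: "graph V E" using three_connected_graph[OF tc] .
  obtain a where S: "A - B = {a}" and N: "nbrs E a = A \<inter> B" and e1: "edges_in E (A \<inter> B) \<le> 1"
    using thin_single_vertex_side[OF tc sep o3 th k] .
  show ?thesis
  proof (cases "edges_in E (A \<inter> B) = 0")
    case True
    then have none: "\<forall>e\<in>E. \<not> e \<subseteq> A \<inter> B" using edges_in_eq_0_iff[OF g] by blast
    have "\<not> adj E x y" if "x \<in> A \<inter> B" "y \<in> A \<inter> B" for x y
      using none that unfolding adj_def by (metis empty_subsetI insert_subset)
    moreover obtain v1 v2 v3 where "A \<inter> B = {v1, v2, v3}" "v1 \<noteq> v2" "v1 \<noteq> v3" "v2 \<noteq> v3"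
      using o3 by (rule card_3E)
    ultimately show ?thesis using degenerate_independentI[OF sep nt _ _ _ _ k] by blast
  next
    case False
    then have "card {e\<in>E. e \<subseteq> A \<inter> B} = 1" using e1 unfolding edges_in_def by simp
    then obtain f where "{e\<in>E. e \<subseteq> A \<inter> B} = {f}" by (meson card_1_singletonE)
    then show ?thesis by (rule degenerate_single_vertex_side_one_edgeI[OF g sep nt S N o3])
  qed
qed

lemma thin_two_vertex_side:
  assumes tc: "three_connected V E" and sep: "separation V E A B" and th: "thin E A B"
    and S: "A - B = {a, b}" "a \<noteq> b"
  shows "adj E a b" "edges_in E (A \<inter> B) = 0"
    "card (nbrs E a \<inter> (A \<inter> B)) = 2" "card (nbrs E b \<inter> (A \<inter> B)) = 2"
proof -
  have g: "graph V E" using three_connected_graph[OF tc] .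
  have fA: "finite A" using separation_subset[OF sep] g unfolding graph_def by (meson finite_subset)
  let ?M = "\<lambda>s. card (nbrs E s \<inter> (A \<inter> B))"
  have "A - B - {a} = {b}" "A - B - {b} = {a}" using S by auto
  then have "3 \<le> ?M a + of_bool (adj E a b)" "3 \<le> ?M b + of_bool (adj E a b)"
    using three_connected_interior_degree[OF tc sep, of a] three_connected_interior_degree[OF tc sep, of b]
      S card_nbrs_Int_singleton[of E a b] card_nbrs_Int_singleton[of E b a]
    by (simp_all add: adj_commute[of E b a])
  moreover have "(\<Sum>s\<in>A - B. ?M s) = ?M a + ?M b" unfolding S(1) using S(2) by simp
  moreover have "of_bool (adj E a b) \<le> edges_in E (A - B)" unfolding S(1) by (rule edges_in_doubleton_ge)
  moreover have "edges_in E A \<le> 5" using th S unfolding thin_def by simp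
  moreover have "of_bool (adj E a b) \<le> (1::nat)" by simp
  ultimately have counts: "of_bool (adj E a b) = (1::nat)" "edges_in E (A \<inter> B) = 0" "?M a = 2" "?M b = 2"
    using edges_in_decomp_ge[OF g fA, of B] by linarith+
  show "adj E a b" using counts(1) unfolding of_bool_eq_1_iff .
  show "edges_in E (A \<inter> B) = 0" "?M a = 2" "?M b = 2" by (fact counts)+
qed

lemma thin_three_vertex_side:
  assumes tc: "three_connected V E" and sep: "separation V E A B" and th: "thin E A B"
    and S: "A - B = {a, b, c}" "a \<noteq> b" "a \<noteq> c" "b \<noteq> c"
  shows "adj E a b" "adj E b c" "adj E a c" "edges_in E (A \<inter> B) = 0"
    "card (nbrs E a \<inter> (A \<inter> B)) = 1" "card (nbrs E b \<inter> (A \<inter> B)) = 1"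
    "card (nbrs E c \<inter> (A \<inter> B)) = 1"
proof -
  have g: "graph V E" using three_connected_graph[OF tc] .
  have fA: "finite A" using separation_subset[OF sep] g unfolding graph_def by (meson finite_subset)
  let ?M = "\<lambda>s. card (nbrs E s \<inter> (A \<inter> B))"
  have "A - B - {a} = {b, c}" "A - B - {b} = {a, c}" "A - B - {c} = {a, b}" using S by auto
  then have "3 \<le> ?M a + of_bool (adj E a b) + of_bool (adj E a c)"
      "3 \<le> ?M b + of_bool (adj E a b) + of_bool (adj E b c)"
      "3 \<le> ?M c + of_bool (adj E a c) + of_bool (adj E b c)"
    using three_connected_interior_degree[OF tc sep, of a] three_connected_interior_degree[OF tc sep, of b]
      three_connected_interior_degree[OF tc sep, of c] S card_nbrs_Int_doubleton[of E a b c]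
      card_nbrs_Int_doubleton[of E b a c] card_nbrs_Int_doubleton[of E c a b]
    by (simp_all add: adj_commute[of E b a] adj_commute[of E c a] adj_commute[of E c b])
  moreover have "(\<Sum>s\<in>A - B. ?M s) = ?M a + ?M b + ?M c" unfolding S(1) using S(2-4) by simp
  moreover have "of_bool (adj E a b) + of_bool (adj E a c) + of_bool (adj E b c) \<le> edges_in E (A - B)"
    unfolding S(1) by (rule edges_in_triple_ge[OF S(2-4)])
  moreover have "edges_in E A \<le> 6" using th S card_3_iff unfolding thin_def by auto
  moreover have "of_bool (adj E a b) \<le> (1::nat)" "of_bool (adj E a c) \<le> (1::nat)"
    "of_bool (adj E b c) \<le> (1::nat)" by simp_all
  ultimately have counts: "of_bool (adj E a b) = (1::nat)" "of_bool (adj E b c) = (1::nat)"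
      "of_bool (adj E a c) = (1::nat)" "edges_in E (A \<inter> B) = 0" "?M a = 1" "?M b = 1" "?M c = 1"
    using edges_in_decomp_ge[OF g fA, of B] by linarith+
  show "adj E a b" "adj E b c" "adj E a c" using counts(1-3) unfolding of_bool_eq_1_iff by simp_all
  show "edges_in E (A \<inter> B) = 0" "?M a = 1" "?M b = 1" "?M c = 1" by (fact counts)+
qed

lemma degenerate_triangle_no_separator_edgesI:
  assumes g: "graph V E" and sep: "separation V E A B" and nt: "nontrivial_sep V A B"
    and X: "A \<inter> B = {v1, v2, v3}" "v1 \<noteq> v2" "v1 \<noteq> v3" "v2 \<noteq> v3"
    and u: "u1 \<in> A" "u2 \<in> A" "u3 \<in> A" "adj E u1 u2" "adj E u2 u3" "adj E u1 u3"
    and pend: "u1 = v1 \<or> adj E u1 v1" "u2 = v2 \<or> adj E u2 v2" "u3 = v3 \<or> adj E u3 v3"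
    and cover: "A \<subseteq> {u1, u2, u3, v1, v2, v3}"
    and no_sep_edge: "edges_in E (A \<inter> B) = 0"
    and nb: "\<forall>s\<in>A - B. \<forall>w\<in>nbrs E s. {s, w} \<in> {{u1, v1}, {u2, v2}, {u3, v3}, {u1, u2}, {u2, u3}, {u1, u3}}"
  shows "degenerate V E A B"
proof (rule degenerate_triangleI[OF sep nt X u pend cover], intro ballI impI)
  fix e assume e: "e \<in> E" "e \<subseteq> A"
  then have "\<not> e \<subseteq> A \<inter> B" using no_sep_edge edges_in_eq_0_iff[OF g] by blast
  then obtain s w where sw: "s \<in> A - B" "w \<in> nbrs E s" "e = {s, w}"
    using edge_in_side_cases[OF g sep e] by blast
  show "e \<in> {{u1, v1}, {u2, v2}, {u3, v3}, {u1, u2}, {u2, u3}, {u1, u3}}"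
    unfolding sw(3) using bspec[OF nb sw(1)] sw(2) by (rule bspec)
qed

text \<open>Two interior vertices a, b: they are adjacent, each has two neighbours in the separator,
  and these neighbourhoods share exactly one vertex c, which completes the triangle a b c.\<close>
lemma thin_degenerate_card2:
  assumes tc: "three_connected V E" and sep: "separation V E A B" and nt: "nontrivial_sep V A B"
    and o3: "card (A \<inter> B) = 3" and th: "thin E A B" and k: "card (A - B) = 2"
  shows "degenerate V E A B"
proof -
  have g: "graph V E" using three_connected_graph[OF tc] .
  let ?X = "A \<inter> B"
  define M where "M s = nbrs E s \<inter> ?X" for s
  obtain a b where S: "A - B = {a, b}" "a \<noteq> b" using k by (meson card_2_iff)
  note side = thin_two_vertex_side[OF tc sep th S, folded M_def]
  have "?X \<subseteq> M a \<union> M b" using separator_subset_interior_nbrs[OF tc sep nt o3] unfolding S(1) M_def by auto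
  then have U: "M a \<union> M b = ?X" unfolding M_def by blast
  have "finite ?X" using o3 by (intro card_ge_0_finite) simp
  then have "card (M a) + card (M b) = card (M a \<union> M b) + card (M a \<inter> M b)"
    by (intro card_Un_Int) (simp_all add: M_def)
  then have "card (M a \<inter> M b) = 1" using side U o3 by simp
  then obtain c where c: "M a \<inter> M b = {c}" by (meson card_1_singletonE)
  have "c \<in> M a" "c \<in> M b" using c by auto
  then have "card (M a - {c}) = 1" "card (M b - {c}) = 1" using side by (simp_all add: card_Diff_singleton_if)
  then obtain p q where p: "M a - {c} = {p}" and q: "M b - {c} = {q}" by (meson card_1_singletonE)
  have Ma: "M a = {c, p}" and Mb: "M b = {c, q}" using p q c by auto
  have "p \<noteq> q"
  proof
    assume "p = q"
    then have "?X = {c, p}" using U Ma Mb by auto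
    then show False using o3 by (simp add: card_insert_if split: if_splits)
  qed
  moreover have "?X = {p, q, c}" using U Ma Mb by auto
  moreover have "p \<noteq> c" "q \<noteq> c" using p q by auto
  ultimately have X: "?X = {p, q, c}" "p \<noteq> q" "p \<noteq> c" "q \<noteq> c" by simp_all
  have "c \<in> M a" "p \<in> M a" "c \<in> M b" "q \<in> M b" using Ma Mb by simp_all
  then have adjs: "adj E a c" "adj E a p" "adj E b c" "adj E b q" unfolding M_def nbrs_def by simp_all
  have nb: "nbrs E s \<subseteq> (A - B - {s}) \<union> M s" if "s \<in> A - B" for s
    using separation_nbrs_subset[OF g sep that] unfolding M_def by blast
  have nbrs_ab: "nbrs E a \<subseteq> {b, c, p}" "nbrs E b \<subseteq> {a, c, q}" using nb[of a] nb[of b] S Ma Mb by auto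
  have "\<forall>s\<in>A - B. \<forall>w\<in>nbrs E s. {s, w} \<in> {{a, p}, {b, q}, {c, c}, {a, b}, {b, c}, {a, c}}"
  proof (intro ballI)
    fix s w assume "s \<in> A - B" and w: "w \<in> nbrs E s"
    then have "s \<in> {a, b}" using S(1) by simp
    then consider "s = a" "w \<in> {b, c, p}" | "s = b" "w \<in> {a, c, q}"
      using nbrs_ab w by blast
    then show "{s, w} \<in> {{a, p}, {b, q}, {c, c}, {a, b}, {b, c}, {a, c}}"
      by cases (auto simp: insert_commute)
  qed
  moreover have "a \<in> A" "b \<in> A" "c \<in> A" "A \<subseteq> {a, b, c, p, q, c}" using S X by auto
  ultimately show ?thesis
    using degenerate_triangle_no_separator_edgesI[OF g sep nt X, of a b c] side adjs by simp
qed

text \<open>Three interior vertices form a triangle, each with a single neighbour in the separator.\<close>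
lemma thin_degenerate_card3:
  assumes tc: "three_connected V E" and sep: "separation V E A B" and nt: "nontrivial_sep V A B"
    and o3: "card (A \<inter> B) = 3" and th: "thin E A B" and k: "card (A - B) = 3"
  shows "degenerate V E A B"
proof -
  have g: "graph V E" using three_connected_graph[OF tc] .
  let ?X = "A \<inter> B"
  define M where "M s = nbrs E s \<inter> ?X" for s
  obtain a b c where S: "A - B = {a, b, c}" "a \<noteq> b" "a \<noteq> c" "b \<noteq> c" using k by (rule card_3E)
  note side = thin_three_vertex_side[OF tc sep th S, folded M_def]
  obtain p q r where p: "M a = {p}" and q: "M b = {q}" and r: "M c = {r}"
    using side(5-7) by (meson card_1_singletonE)
  have "?X \<subseteq> M a \<union> M b \<union> M c" using separator_subset_interior_nbrs[OF tc sep nt o3] unfolding S(1) M_def by auto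
  then have "?X \<subseteq> {p, q, r}" using p q r by auto
  moreover have "{p, q, r} \<subseteq> ?X" using p q r unfolding M_def by blast
  ultimately have X: "?X = {p, q, r}" "p \<noteq> q" "p \<noteq> r" "q \<noteq> r"
    using o3 by (auto simp: card_insert_if split: if_splits)
  have "p \<in> M a" "q \<in> M b" "r \<in> M c" using p q r by simp_all
  then have adjs: "adj E a p" "adj E b q" "adj E c r" unfolding M_def nbrs_def by simp_all
  have nb: "nbrs E s \<subseteq> (A - B - {s}) \<union> M s" if "s \<in> A - B" for s
    using separation_nbrs_subset[OF g sep that] unfolding M_def by blast
  have nbrs_abc: "nbrs E a \<subseteq> {b, c, p}" "nbrs E b \<subseteq> {a, c, q}" "nbrs E c \<subseteq> {a, b, r}"
    using nb[of a] nb[of b] nb[of c] S p q r by auto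
  have "\<forall>s\<in>A - B. \<forall>w\<in>nbrs E s. {s, w} \<in> {{a, p}, {b, q}, {c, r}, {a, b}, {b, c}, {a, c}}"
  proof (intro ballI)
    fix s w assume "s \<in> A - B" and w: "w \<in> nbrs E s"
    then have "s \<in> {a, b, c}" using S(1) by simp
    then consider "s = a" "w \<in> {b, c, p}" | "s = b" "w \<in> {a, c, q}" | "s = c" "w \<in> {a, b, r}"
      using nbrs_abc w by blast
    then show "{s, w} \<in> {{a, p}, {b, q}, {c, r}, {a, b}, {b, c}, {a, c}}"
      by cases (auto simp: insert_commute)
  qed
  moreover have "a \<in> A" "b \<in> A" "c \<in> A" "A \<subseteq> {a, b, c, p, q, r}" using S X by auto
  ultimately show ?thesis
    using degenerate_triangle_no_separator_edgesI[OF g sep nt X, of a b c] side adjs by simp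
qed

lemma thin_imp_degenerate:
  assumes tc: "three_connected V E" and sep: "separation V E A B" and nt: "nontrivial_sep V A B"
    and o3: "card (A \<inter> B) = 3" and th: "thin E A B"
  shows "degenerate V E A B"
proof -
  have "finite A" using separation_subset[OF sep] three_connected_graph[OF tc]
    unfolding graph_def by (meson finite_subset)
  then have "1 \<le> card (A - B)"
    using nontrivial_sep_diff_nonempty[OF sep nt] by (simp add: Suc_le_eq card_gt_0_iff)
  moreover have "card (A - B) \<le> 3" by (rule thin_card_diff_le[OF tc sep nt o3 th])
  ultimately consider "card (A - B) = 1" | "card (A - B) = 2" | "card (A - B) = 3" by linarith
  then show ?thesis
    using thin_degenerate_card1[OF tc sep nt o3 th] thin_degenerate_card2[OF tc sep nt o3 th]
      thin_degenerate_card3[OF tc sep nt o3 th] by cases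
qed

section \<open>Splitting a vertex\<close>

definition thinly_three_connected :: "'a set \<Rightarrow> 'a set set \<Rightarrow> bool" where
  "thinly_three_connected V E \<longleftrightarrow> three_connected V E \<and>
     (\<forall>A B. separation V E A B \<and> nontrivial_sep V A B \<and> sep_order A B = 3 \<longrightarrow>
        thin E A B \<or> thin E B A)"

text \<open>Contracting the new edge v1 v2 undoes the split; unsplit v v1 v2, abbreviated \<pi> below, is
  the induced map from the vertices of the split graph back to V.\<close>
definition unsplit :: "'a \<Rightarrow> 'a \<Rightarrow> 'a \<Rightarrow> 'a \<Rightarrow> 'a" where
  "unsplit v v1 v2 x = (if x = v1 \<or> x = v2 then v else x)"

text \<open>The data of one step of split_step.\<close>
locale vertex_split =
  fixes V :: "'a set" and E :: "'a set set" and v :: 'a and N1 N2 :: "'a set" and v1 v2 :: 'a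
    and V' :: "'a set" and E' :: "'a set set"
  assumes g: "graph V E" and vV: "v \<in> V"
    and NU: "N1 \<union> N2 = nbrs E v" and ND: "N1 \<inter> N2 = {}" and cN1: "2 \<le> card N1" and cN2: "2 \<le> card N2"
    and v12: "v1 \<noteq> v2" and v1_new: "v1 \<notin> V - {v}" and v2_new: "v2 \<notin> V - {v}"
    and V'_def: "V' = (V - {v}) \<union> {v1, v2}"
    and E'_def: "E' = {e\<in>E. v \<notin> e} \<union> {{v1, v2}} \<union> {{v1, u} | u. u \<in> N1} \<union> {{v2, u} | u. u \<in> N2}"
begin

abbreviation "\<pi> \<equiv> unsplit v v1 v2"

lemma N_subset: "N1 \<subseteq> V - {v}" "N2 \<subseteq> V - {v}"
  using nbrs_subset[OF g, of v] NU by blast+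

lemma new_notin_N: "v1 \<notin> N1" "v1 \<notin> N2" "v2 \<notin> N1" "v2 \<notin> N2"
  using N_subset v1_new v2_new by blast+

lemma finite_V: "finite V" using g unfolding graph_def by simp

lemma finite_V': "finite V'" using V'_def finite_V by simp

lemma adj_v_iff: "adj E v x \<longleftrightarrow> x \<in> N1 \<or> x \<in> N2"
  using NU unfolding nbrs_def by blast

lemma adj_split_iff: "adj E' x y \<longleftrightarrow> (adj E x y \<and> x \<noteq> v \<and> y \<noteq> v) \<or> {x, y} = {v1, v2}
    \<or> (\<exists>w\<in>N1. {x, y} = {v1, w}) \<or> (\<exists>w\<in>N2. {x, y} = {v2, w})"
  unfolding adj_def E'_def by auto

lemma adj_split_new: "adj E' v1 v2"
  unfolding adj_split_iff by simp

lemma graph_split: "graph V' E'"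
proof -
  have E_edge: "e \<subseteq> V \<and> card e = 2" if "e \<in> E" for e using g that unfolding graph_def by blast
  have "e \<subseteq> V' \<and> card e = 2" if e: "e \<in> E'" for e
  proof -
    consider (old) "e \<in> E" "v \<notin> e" | (new) "e = {v1, v2}" | (N1) w where "w \<in> N1" "e = {v1, w}"
      | (N2) w where "w \<in> N2" "e = {v2, w}" using e unfolding E'_def by blast
    then show ?thesis
    proof cases
      case old then show ?thesis using E_edge V'_def by auto
    next
      case new then show ?thesis using v12 V'_def by auto
    next
      case N1
      then have "w \<noteq> v1" using new_notin_N(1) by blast
      then show ?thesis using N1 N_subset(1) V'_def by auto
    next
      case N2
      then have "w \<noteq> v2" using new_notin_N(4) by blast
      then show ?thesis using N2 N_subset(2) V'_def by auto
    qed
  qed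
  then show ?thesis unfolding graph_def using finite_V' by blast
qed

lemma card_split: "card V' = card V + 1"
proof -
  have "V' = insert v1 (insert v2 (V - {v}))" using V'_def by auto
  then have "card V' = card (V - {v}) + 2" using finite_V v12 v1_new v2_new by simp
  then show ?thesis using vV finite_V card_gt_0_iff[of V] by (auto simp: card_Diff_singleton)
qed

lemma nbrs_split_v1: "nbrs E' v1 = insert v2 N1"
  using adj_imp_vertices[OF g, of v1] v1_new v12 new_notin_N
  unfolding nbrs_def adj_split_iff by (auto simp: doubleton_eq_iff)

lemma nbrs_split_v2: "nbrs E' v2 = insert v1 N2"
  using adj_imp_vertices[OF g, of v2] v2_new v12 new_notin_N
  unfolding nbrs_def adj_split_iff by (auto simp: doubleton_eq_iff)

lemma unsplit_old: "x \<in> V - {v} \<Longrightarrow> \<pi> x = x"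
  unfolding unsplit_def using v1_new v2_new by auto

lemma unsplit_new: "\<pi> v1 = v" "\<pi> v2 = v"
  unfolding unsplit_def by auto

lemma split_vertex_cases: "y \<in> V' \<Longrightarrow> y \<in> V - {v} \<or> y = v1 \<or> y = v2"
  using V'_def by auto

lemma unsplit_image_old: "\<pi> ` (V - {v}) = V - {v}"
  using unsplit_old by (simp add: image_cong[of "V - {v}" "V - {v}" \<pi> id])

lemma unsplit_image_V': "\<pi> ` V' = V"
proof -
  have "\<pi> ` V' = insert (\<pi> v1) (insert (\<pi> v2) (\<pi> ` (V - {v})))" unfolding V'_def by auto
  then show ?thesis using vV unfolding unsplit_image_old unsplit_new by auto
qed

lemma unsplit_image_subset: "A' \<subseteq> V' \<Longrightarrow> \<pi> ` A' \<subseteq> V"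
  using image_mono unsplit_image_V' by metis

lemma old_in_unsplit_image:
  assumes A': "A' \<subseteq> V'" and x: "x \<in> V - {v}"
  shows "x \<in> \<pi> ` A' \<longleftrightarrow> x \<in> A'"
proof
  assume "x \<in> \<pi> ` A'"
  then obtain y where y: "y \<in> A'" "x = \<pi> y" by blast
  then have "y \<in> V - {v} \<or> y = v1 \<or> y = v2" using split_vertex_cases A' by blast
  then show "x \<in> A'" using y x unsplit_old unsplit_new by auto
next
  assume "x \<in> A'" then show "x \<in> \<pi> ` A'" using unsplit_old[OF x] by (metis image_eqI)
qed

lemma v_in_unsplit_image:
  assumes A': "A' \<subseteq> V'"
  shows "v \<in> \<pi> ` A' \<longleftrightarrow> v1 \<in> A' \<or> v2 \<in> A'"
proof
  assume "v \<in> \<pi> ` A'"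
  then obtain y where y: "y \<in> A'" "v = \<pi> y" by blast
  then have "y \<in> V - {v} \<or> y = v1 \<or> y = v2" using split_vertex_cases A' by blast
  then show "v1 \<in> A' \<or> v2 \<in> A'" using y unsplit_old by auto
next
  assume "v1 \<in> A' \<or> v2 \<in> A'" then show "v \<in> \<pi> ` A'" using unsplit_new by (metis image_eqI)
qed

lemma adj_lift:
  assumes "adj E x y"
  obtains x' y' where "x' \<in> V'" "y' \<in> V'" "\<pi> x' = x" "\<pi> y' = y" "adj E' x' y'"
proof -
  have xy: "x \<in> V" "y \<in> V" "x \<noteq> y" using adj_imp_vertices[OF g assms] adj_imp_neq[OF g assms] by auto
  have vert: "z \<in> V'" "\<pi> z = z" if "z \<in> V" "z \<noteq> v" for z
    using that unsplit_old V'_def by auto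
  show thesis
  proof (cases "x = v")
    case True
    then have "y \<in> N1 \<or> y \<in> N2" "y \<noteq> v" using assms adj_v_iff xy by auto
    then show thesis
      using that[of v1 y] that[of v2 y] vert[OF xy(2)] unsplit_new True V'_def
      unfolding adj_split_iff by auto
  next
    case x: False
    show thesis
    proof (cases "y = v")
      case True
      then have "x \<in> N1 \<or> x \<in> N2" using assms adj_v_iff adj_commute by metis
      then show thesis
        using that[of x v1] that[of x v2] vert[OF xy(1) x] unsplit_new True V'_def
        unfolding adj_split_iff by (auto simp: insert_commute)
    next
      case False
      then show thesis using that[of x y] vert xy x assms unfolding adj_split_iff by auto
    qed
  qed
qed

text \<open>Adjacent vertices of G lift to adjacent vertices of the split graph, so the image of a
  separation under \<pi> is again a separation.\<close>
lemma separation_unsplit: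
  assumes sep: "separation V' E' A' B'"
  shows "separation V E (\<pi> ` A') (\<pi> ` B')"
  unfolding separation_def
proof (intro conjI ballI notI)
  show "\<pi> ` A' \<union> \<pi> ` B' = V"
    using separation_Un[OF sep] unsplit_image_V' by (simp add: image_Un[symmetric])
next
  fix x y assume x: "x \<in> \<pi> ` A' - \<pi> ` B'" and y: "y \<in> \<pi> ` B' - \<pi> ` A'" and xy: "adj E x y"
  obtain x' y' where "x' \<in> V'" "y' \<in> V'" "\<pi> x' = x" "\<pi> y' = y" "adj E' x' y'"
    using adj_lift[OF xy] .
  moreover have "A' \<union> B' = V'" using separation_Un[OF sep] .
  ultimately have "x' \<in> A' - B'" "y' \<in> B' - A'" using x y by auto
  then show False using separation_no_adj[OF sep] \<open>adj E' x' y'\<close> by blast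
qed


lemma unsplit_Int_subset:
  assumes sep: "separation V' E' A' B'"
  shows "\<pi> ` A' \<inter> \<pi> ` B' \<subseteq> \<pi> ` (A' \<inter> B')"
proof
  have AV: "A' \<subseteq> V'" "B' \<subseteq> V'" using separation_subset[OF sep] by auto
  fix x assume x: "x \<in> \<pi> ` A' \<inter> \<pi> ` B'"
  show "x \<in> \<pi> ` (A' \<inter> B')"
  proof (cases "x = v")
    case True
    then have "v1 \<in> A' \<or> v2 \<in> A'" "v1 \<in> B' \<or> v2 \<in> B'"
      using x v_in_unsplit_image AV by auto
    moreover have "\<not> (v1 \<in> A' - B' \<and> v2 \<in> B' - A')" "\<not> (v2 \<in> A' - B' \<and> v1 \<in> B' - A')"
      using separation_no_adj[OF sep] adj_split_new adj_commute by metis+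
    ultimately have "v1 \<in> A' \<inter> B' \<or> v2 \<in> A' \<inter> B'" by blast
    then show ?thesis using True unsplit_new by (metis image_eqI)
  next
    case False
    then have xV: "x \<in> V - {v}" using x unsplit_image_subset[OF AV(1)] by blast
    then have "x \<in> A' \<inter> B'" using x old_in_unsplit_image[OF AV(1) xV] old_in_unsplit_image[OF AV(2) xV] by blast
    then show ?thesis using unsplit_old[OF xV] by (metis image_eqI)
  qed
qed

lemma card_unsplit_Int_le:
  assumes sep: "separation V' E' A' B'"
  shows "card (\<pi> ` A' \<inter> \<pi> ` B') \<le> card (A' \<inter> B')"
proof -
  have f: "finite (A' \<inter> B')" using separation_subset[OF sep] finite_V' finite_subset by blast
  have "card (\<pi> ` A' \<inter> \<pi> ` B') \<le> card (\<pi> ` (A' \<inter> B'))"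
    by (rule card_mono) (use f unsplit_Int_subset[OF sep] in auto)
  also have "\<dots> \<le> card (A' \<inter> B')" by (rule card_image_le[OF f])
  finally show ?thesis .
qed

lemma card_unsplit_Int_less:
  assumes sep: "separation V' E' A' B'" and new: "v1 \<in> A' \<inter> B'" "v2 \<in> A' \<inter> B'"
  shows "card (\<pi> ` A' \<inter> \<pi> ` B') < card (A' \<inter> B')"
proof -
  let ?X = "A' \<inter> B'"
  have f: "finite ?X" using separation_subset[OF sep] finite_V' finite_subset by blast
  have "\<pi> ` ?X = \<pi> ` (?X - {v2})"
    using new unsplit_new by (auto simp: image_iff) (metis Diff_iff Int_iff singletonD v12)
  then have "card (\<pi> ` ?X) \<le> card (?X - {v2})" using card_image_le[of "?X - {v2}" \<pi>] f by simp
  also have "\<dots> < card ?X" using f new(2) by (rule card_Diff1_less)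
  finally have "card (\<pi> ` ?X) < card ?X" .
  moreover have "card (\<pi> ` A' \<inter> \<pi> ` B') \<le> card (\<pi> ` ?X)"
    by (rule card_mono) (use f unsplit_Int_subset[OF sep] in auto)
  ultimately show ?thesis by linarith
qed

lemma full_unsplit_side_new:
  assumes sep: "separation V' E' A' B'" and proper: "A' \<noteq> V'" and full: "\<pi> ` A' = V"
  shows "v1 \<notin> A' \<or> v2 \<notin> A'"
proof (rule ccontr)
  assume "\<not> (v1 \<notin> A' \<or> v2 \<notin> A')"
  moreover have "A' \<subseteq> V'" using separation_subset[OF sep] by blast
  moreover have "x \<in> A'" if "x \<in> V - {v}" for x
    using old_in_unsplit_image[OF \<open>A' \<subseteq> V'\<close> that] full that by blast
  ultimately have "A' = V'" using split_vertex_cases by blast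
  then show False using proper by contradiction
qed


text \<open>If the image of A' is all of V, then every old vertex lies in A'.\<close>
lemma full_unsplit_side_structure:
  assumes sep: "separation V' E' A' B'" and full: "\<pi> ` A' = V" and wA: "w \<notin> A'"
    and ww: "{w, w'} = {v1, v2}" "w \<noteq> w'" and nw: "nbrs E' w = insert w' M" and MV: "M \<subseteq> V - {v}"
  shows "B' - A' = {w}" "insert w' M \<subseteq> A' \<inter> B'"
proof -
  have AV: "A' \<subseteq> V'" "B' \<subseteq> V'" using separation_subset[OF sep] by auto
  have ww': "w = v1 \<and> w' = v2 \<or> w = v2 \<and> w' = v1" using ww by (auto simp: doubleton_eq_iff)
  have old_A: "x \<in> A'" if "x \<in> V - {v}" for x
    using old_in_unsplit_image[OF AV(1) that] full that by blast
  have "w \<in> V'" "w' \<in> V'" using ww' V'_def by auto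
  then have wB: "w \<in> B' - A'" using wA separation_Un[OF sep] by blast
  have "v1 \<in> A' \<or> v2 \<in> A'" using v_in_unsplit_image[OF AV(1)] full vV by simp
  then have w'A: "w' \<in> A'" using ww' wA by blast
  show "B' - A' = {w}"
  proof
    show "B' - A' \<subseteq> {w}"
      using AV split_vertex_cases old_A ww' w'A by blast
  qed (use wB in blast)
  have "nbrs E' w \<subseteq> B'"
    using separation_nbrs_subset[OF graph_split separation_swap[OF sep]] wB by blast
  then show "insert w' M \<subseteq> A' \<inter> B'" using nw MV old_A w'A by blast
qed

lemma full_unsplit_side:
  assumes sep: "separation V' E' A' B'" and full: "\<pi> ` A' = V" and wA: "w \<notin> A'"
    and ww: "{w, w'} = {v1, v2}" "w \<noteq> w'"
    and nw: "nbrs E' w = insert w' M" and nw': "nbrs E' w' = insert w M'"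
    and MM: "M \<inter> M' = {}" and cM: "2 \<le> card M" and MV: "M \<subseteq> V - {v}"
  shows "3 \<le> card (A' \<inter> B')" "card (A' \<inter> B') = 3 \<Longrightarrow> thin E' B' A'"
proof -
  note side = full_unsplit_side_structure[OF sep full wA ww nw MV]
  have fX: "finite (A' \<inter> B')" using separation_subset[OF sep] finite_V' finite_subset by blast
  have ww': "w = v1 \<and> w' = v2 \<or> w = v2 \<and> w' = v1" using ww by (auto simp: doubleton_eq_iff)
  have w'M: "w' \<notin> M" "w \<notin> M" using ww' MV v1_new v2_new by auto
  have fM: "finite M" using MV finite_V finite_subset by blast
  then have cI: "card (insert w' M) = card M + 1" using w'M by simp
  then show "3 \<le> card (A' \<inter> B')" using card_mono[OF fX side(2)] cM by simp
  assume c3: "card (A' \<inter> B') = 3"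
  then have "A' \<inter> B' = insert w' M" using card_seteq[OF fX side(2)] cI cM by simp
  moreover from this have "card M = 2" using cI c3 by simp
  then obtain p q where pq: "M = {p, q}" "p \<noteq> q" by (meson card_2_iff)
  ultimately have B': "B' = {w, w', p, q}" using side(1) by blast
  have "{e\<in>E'. e \<subseteq> B'} \<subseteq> {{w, w'}, {w, p}, {w, q}, {p, q}}"
  proof
    fix e assume e: "e \<in> {e\<in>E'. e \<subseteq> B'}"
    then have eE: "e \<in> E'" and eB: "e \<subseteq> B'" by auto
    obtain x y where xy: "x \<noteq> y" "e = {x, y}" using edge_doubleton[OF graph_split eE] by blast
    then have "adj E' x y" "adj E' y x" using eE unfolding adj_def by (auto simp: insert_commute)
    then have "x \<in> nbrs E' y" "y \<in> nbrs E' x" unfolding nbrs_def by auto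
    moreover have "x \<in> {w, w', p, q}" "y \<in> {w, w', p, q}" using eB xy B' by auto
    ultimately show "e \<in> {{w, w'}, {w, p}, {w, q}, {p, q}}"
      using xy nw nw' MM pq ww(2) w'M by (auto simp: doubleton_eq_iff)
  qed
  then have "edges_in E' B' \<le> card {{w, w'}, {w, p}, {w, q}, {p, q}}"
    unfolding edges_in_def by (rule card_mono[rotated]) simp
  also have "\<dots> \<le> 4" by (simp add: card_insert_if)
  finally show "thin E' B' A'" unfolding thin_def using side(1) by simp
qed


lemma split_edge_cases:
  assumes e: "e \<in> E'" "e \<noteq> {v1, v2}"
  obtains (old) "v \<notin> \<pi> ` e" "\<pi> ` e = e" "e \<in> E"
  | (new) x where "x \<in> N1 \<union> N2" "\<pi> ` e = {v, x}" "e = {if x \<in> N1 then v1 else v2, x}"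
proof -
  consider (old) "e \<in> E" "v \<notin> e" | (N1) x where "x \<in> N1" "e = {v1, x}"
    | (N2) x where "x \<in> N2" "e = {v2, x}" using e unfolding E'_def by blast
  then show thesis
  proof cases
    case old
    then have "v1 \<notin> e" "v2 \<notin> e" using g v1_new v2_new unfolding graph_def by blast+
    then have "\<pi> ` e = (\<lambda>x. x) ` e" by (intro image_cong) (auto simp: unsplit_def)
    then show thesis using old that(1) by simp
  next
    case N1
    then have "\<pi> x = x" using N_subset unsplit_old by blast
    then show thesis using N1 unsplit_new that(2)[of x] by simp
  next
    case N2
    then have "\<pi> x = x" "x \<notin> N1" using N_subset ND unsplit_old by blast+
    then show thesis using N2 unsplit_new that(2)[of x] by simp
  qed
qed

lemma unsplit_edge:
  assumes "e \<in> E'" "e \<noteq> {v1, v2}"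
  shows "\<pi> ` e \<in> E"
  using assms
proof (cases rule: split_edge_cases)
  case (new x)
  then show ?thesis using adj_v_iff unfolding adj_def by simp
qed simp

lemma inj_on_unsplit_edges: "inj_on ((`) \<pi>) (E' - {{v1, v2}})"
proof (rule inj_onI)
  fix e1 e2 assume e: "e1 \<in> E' - {{v1, v2}}" "e2 \<in> E' - {{v1, v2}}" and eq: "\<pi> ` e1 = \<pi> ` e2"
  have e1: "e1 \<in> E'" "e1 \<noteq> {v1, v2}" and e2: "e2 \<in> E'" "e2 \<noteq> {v1, v2}" using e by auto
  have xv: "x \<noteq> v" if "x \<in> N1 \<union> N2" for x using that N_subset by blast
  from e1 show "e1 = e2"
  proof (cases rule: split_edge_cases)
    case old
    from e2 show ?thesis
      by (cases rule: split_edge_cases) (use old eq in auto)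
  next
    case (new x1)
    from e2 show ?thesis
    proof (cases rule: split_edge_cases)
      case (new x2)
      then have "x1 = x2" using \<open>\<pi> ` e1 = {v, x1}\<close> \<open>x1 \<in> N1 \<union> N2\<close> eq xv
        by (auto simp: doubleton_eq_iff)
      then show ?thesis using \<open>e1 = _\<close> new by simp
    qed (use new eq in auto)
  qed
qed

lemma edges_in_split_le:
  "edges_in E' A' \<le> edges_in E (\<pi> ` A') + of_bool (v1 \<in> A' \<and> v2 \<in> A')"
proof -
  let ?F' = "{e\<in>E'. e \<subseteq> A'}"
  have fE: "finite E" "finite E'" using graph_finite_edges[OF g] graph_finite_edges[OF graph_split] by auto
  have "?F' - {{v1, v2}} \<subseteq> E' - {{v1, v2}}" by blast
  then have "card (?F' - {{v1, v2}}) = card ((`) \<pi> ` (?F' - {{v1, v2}}))"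
    using card_image[OF inj_on_subset[OF inj_on_unsplit_edges]] by metis
  also have "\<dots> \<le> edges_in E (\<pi> ` A')"
    unfolding edges_in_def using unsplit_edge fE by (intro card_mono) auto
  finally have "card (?F' - {{v1, v2}}) \<le> edges_in E (\<pi> ` A')" .
  moreover have "card ?F' \<le> card (?F' - {{v1, v2}}) + of_bool (v1 \<in> A' \<and> v2 \<in> A')"
  proof (cases "v1 \<in> A' \<and> v2 \<in> A'")
    case True
    have "card ?F' \<le> Suc (card (?F' - {{v1, v2}}))"
      using card_Suc_Diff1[of ?F' "{v1, v2}"] card_Diff1_le[of ?F' "{v1, v2}"] fE
      by (cases "{v1, v2} \<in> ?F'") simp_all
    then show ?thesis using True by simp
  next
    case False
    then have "?F' - {{v1, v2}} = ?F'" by auto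
    then show ?thesis by simp
  qed
  ultimately show ?thesis unfolding edges_in_def by linarith
qed

lemma unsplit_diff_subset:
  assumes sep: "separation V' E' A' B'" and W: "W \<subseteq> {v1, v2}"
    and v: "v \<in> \<pi> ` A' - \<pi> ` B' \<Longrightarrow> v \<in> \<pi> ` (A' - B' - W)"
  shows "\<pi> ` A' - \<pi> ` B' \<subseteq> \<pi> ` (A' - B' - W)"
proof
  have AV: "A' \<subseteq> V'" "B' \<subseteq> V'" using separation_subset[OF sep] by auto
  fix x assume x: "x \<in> \<pi> ` A' - \<pi> ` B'"
  show "x \<in> \<pi> ` (A' - B' - W)"
  proof (cases "x = v")
    case False
    then have xV: "x \<in> V - {v}" using x unsplit_image_subset[OF AV(1)] by blast
    have "x \<in> A'" "x \<notin> B'"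
      using x old_in_unsplit_image[OF AV(1) xV] old_in_unsplit_image[OF AV(2) xV] by auto
    moreover have "x \<notin> W" using W xV v1_new v2_new by blast
    ultimately have "x \<in> A' - B' - W" by blast
    then show ?thesis using unsplit_old[OF xV] by (metis image_eqI)
  qed (use x v in blast)
qed

text \<open>If both new vertices lie in A', at least one of them lies in A' - B', and the two of
  them have the same image.\<close>
lemma card_unsplit_diff_le:
  assumes sep: "separation V' E' A' B'" and not_both: "\<not> (v1 \<in> A' \<inter> B' \<and> v2 \<in> A' \<inter> B')"
  shows "card (\<pi> ` A' - \<pi> ` B') + of_bool (v1 \<in> A' \<and> v2 \<in> A') \<le> card (A' - B')"
proof -
  have AV: "A' \<subseteq> V'" "B' \<subseteq> V'" using separation_subset[OF sep] by auto
  have fD: "finite (A' - B')" using AV finite_V' finite_subset by blast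
  show ?thesis
  proof (cases "v1 \<in> A' \<and> v2 \<in> A'")
    case False
    have "v \<in> \<pi> ` (A' - B')" if "v \<in> \<pi> ` A' - \<pi> ` B'"
    proof -
      have "v1 \<in> A' \<or> v2 \<in> A'" "v1 \<notin> B'" "v2 \<notin> B'"
        using that v_in_unsplit_image[OF AV(1)] v_in_unsplit_image[OF AV(2)] by auto
      then show ?thesis using unsplit_new by (metis DiffI image_eqI)
    qed
    then have "card (\<pi> ` A' - \<pi> ` B') \<le> card (\<pi> ` (A' - B'))"
      using unsplit_diff_subset[OF sep, of "{}"] fD by (simp add: card_mono)
    also have "\<dots> \<le> card (A' - B')" using fD by (rule card_image_le)
    finally have "card (\<pi> ` A' - \<pi> ` B') \<le> card (A' - B')" .
    moreover have "of_bool (v1 \<in> A' \<and> v2 \<in> A') = (0::nat)" using False by simp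
    ultimately show ?thesis by linarith
  next
    case True
    then obtain w where w: "w \<in> {v1, v2}" "w \<in> A' - B'" using not_both by blast
    have "v \<in> \<pi> ` (A' - B' - {w})" if "v \<in> \<pi> ` A' - \<pi> ` B'"
    proof -
      have "v1 \<in> A' - B'" "v2 \<in> A' - B'" using that v_in_unsplit_image[OF AV(2)] True by auto
      then show ?thesis using w v12 unsplit_new by (metis Diff_iff empty_iff image_eqI insert_iff)
    qed
    then have "card (\<pi> ` A' - \<pi> ` B') \<le> card (\<pi> ` (A' - B' - {w}))"
      using unsplit_diff_subset[OF sep, of "{w}"] w fD by (simp add: card_mono)
    also have "\<dots> \<le> card (A' - B' - {w})" using fD by (simp add: card_image_le)
    also have "\<dots> < card (A' - B')" using fD w(2) by (rule card_Diff1_less)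
    finally have "card (\<pi> ` A' - \<pi> ` B') < card (A' - B')" .
    moreover have "of_bool (v1 \<in> A' \<and> v2 \<in> A') = (1::nat)" using True by simp
    ultimately show ?thesis by linarith
  qed
qed

lemma thin_unsplit_imp_thin:
  assumes sep: "separation V' E' A' B'" and not_both: "\<not> (v1 \<in> A' \<inter> B' \<and> v2 \<in> A' \<inter> B')"
    and th: "thin E (\<pi> ` A') (\<pi> ` B')"
  shows "thin E' A' B'"
  using edges_in_split_le[of A'] card_unsplit_diff_le[OF sep not_both] th unfolding thin_def by linarith

lemma full_unsplit_side_thin:
  assumes sep: "separation V' E' A' B'" and proper: "A' \<noteq> V'" and full: "\<pi> ` A' = V"
  shows "3 \<le> card (A' \<inter> B')" "card (A' \<inter> B') = 3 \<Longrightarrow> thin E' B' A'"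
proof -
  have "{v1, v2} = {v2, v1}" "N2 \<inter> N1 = {}" using ND by auto
  with full_unsplit_side_new[OF sep proper full] show "3 \<le> card (A' \<inter> B')" "card (A' \<inter> B') = 3 \<Longrightarrow> thin E' B' A'"
    using full_unsplit_side[OF sep full _ _ v12 nbrs_split_v1 nbrs_split_v2 ND cN1 N_subset(1)]
      full_unsplit_side[OF sep full _ _ v12[symmetric] nbrs_split_v2 nbrs_split_v1 _ cN2 N_subset(2)]
    by blast+
qed

lemma split_separation_proper_images:
  assumes tc: "thinly_three_connected V E" and sep: "separation V' E' A' B'"
    and not_both: "\<not> (v1 \<in> A' \<inter> B' \<and> v2 \<in> A' \<inter> B')" and proper: "\<pi> ` A' \<noteq> V" "\<pi> ` B' \<noteq> V"
  shows "3 \<le> card (A' \<inter> B')" "card (A' \<inter> B') = 3 \<Longrightarrow> thin E' A' B' \<or> thin E' B' A'"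
proof -
  have sep_u: "separation V E (\<pi> ` A') (\<pi> ` B')" by (rule separation_unsplit[OF sep])
  have nt_u: "nontrivial_sep V (\<pi> ` A') (\<pi> ` B')" using proper unfolding nontrivial_sep_def by simp
  have tc3: "three_connected V E" using tc unfolding thinly_three_connected_def by simp
  have lower: "3 \<le> card (\<pi> ` A' \<inter> \<pi> ` B')" by (rule three_connected_sep_order[OF tc3 sep_u nt_u])
  moreover have upper: "card (\<pi> ` A' \<inter> \<pi> ` B') \<le> card (A' \<inter> B')" by (rule card_unsplit_Int_le[OF sep])
  ultimately show "3 \<le> card (A' \<inter> B')" by linarith
  assume "card (A' \<inter> B') = 3"
  then have "sep_order (\<pi> ` A') (\<pi> ` B') = 3" using lower upper unfolding sep_order_def by simp
  then have "thin E (\<pi> ` A') (\<pi> ` B') \<or> thin E (\<pi> ` B') (\<pi> ` A')"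
    using tc sep_u nt_u unfolding thinly_three_connected_def by blast
  moreover have "\<not> (v1 \<in> B' \<inter> A' \<and> v2 \<in> B' \<inter> A')" using not_both by blast
  ultimately show "thin E' A' B' \<or> thin E' B' A'"
    using thin_unsplit_imp_thin[OF sep not_both] thin_unsplit_imp_thin[OF separation_swap[OF sep]] by blast
qed

lemma split_separation:
  assumes tc: "thinly_three_connected V E" and sep: "separation V' E' A' B'" and nt: "nontrivial_sep V' A' B'"
  shows "3 \<le> card (A' \<inter> B')" "card (A' \<inter> B') = 3 \<Longrightarrow> thin E' A' B' \<or> thin E' B' A'"
proof -
  have proper: "A' \<noteq> V'" "B' \<noteq> V'" using nt unfolding nontrivial_sep_def by auto
  note sep' = separation_swap[OF sep]
  have tc3: "three_connected V E" using tc unfolding thinly_three_connected_def by simp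
  have "3 \<le> card (A' \<inter> B') \<and> (card (A' \<inter> B') = 3 \<longrightarrow> thin E' A' B' \<or> thin E' B' A')"
  proof (cases "v1 \<in> A' \<inter> B' \<and> v2 \<in> A' \<inter> B'")
    case True
    then have "\<pi> ` A' \<noteq> V" "\<pi> ` B' \<noteq> V"
      using full_unsplit_side_new[OF sep proper(1)] full_unsplit_side_new[OF sep' proper(2)] by blast+
    then have "3 \<le> card (\<pi> ` A' \<inter> \<pi> ` B')"
      using three_connected_sep_order[OF tc3 separation_unsplit[OF sep]] unfolding nontrivial_sep_def by blast
    then show ?thesis using card_unsplit_Int_less[OF sep] True by force
  next
    case False
    consider "\<pi> ` A' = V" | "\<pi> ` B' = V" | "\<pi> ` A' \<noteq> V" "\<pi> ` B' \<noteq> V" by blast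
    then show ?thesis
    proof cases
      case 1
      then show ?thesis using full_unsplit_side_thin[OF sep proper(1)] by blast
    next
      case 2
      then show ?thesis using full_unsplit_side_thin[OF sep' proper(2)] by (simp add: Int_commute)
    next
      case 3
      then show ?thesis using split_separation_proper_images[OF tc sep False] by blast
    qed
  qed
  then show "3 \<le> card (A' \<inter> B')" "card (A' \<inter> B') = 3 \<Longrightarrow> thin E' A' B' \<or> thin E' B' A'" by blast+
qed

lemma thinly_three_connected_split:
  assumes tc: "thinly_three_connected V E"
  shows "thinly_three_connected V' E'"
proof -
  have "card V \<ge> 4" using tc unfolding thinly_three_connected_def three_connected_def by simp
  then have "three_connected V' E'"
    unfolding three_connected_def sep_order_def using graph_split card_split split_separation[OF tc] by auto
  then show ?thesis
    unfolding thinly_three_connected_def sep_order_def using split_separation(2)[OF tc] by blast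
qed

end

section \<open>Expansions of weakly 4-connected graphs\<close>

lemma split_step_thinly_three_connected:
  assumes s: "split_step V E V' E'" and tc: "thinly_three_connected V E"
  shows "thinly_three_connected V' E'"
proof -
  obtain v N1 N2 v1 v2 where "v \<in> V" "N1 \<union> N2 = nbrs E v" "N1 \<inter> N2 = {}" "2 \<le> card N1" "2 \<le> card N2"
    "v1 \<noteq> v2" "v1 \<notin> V - {v}" "v2 \<notin> V - {v}" "V' = (V - {v}) \<union> {v1, v2}"
    "E' = {e\<in>E. v \<notin> e} \<union> {{v1, v2}} \<union> {{v1, u} | u. u \<in> N1} \<union> {{v2, u} | u. u \<in> N2}"
    using s unfolding split_step_def by blast
  moreover have "graph V E" using tc three_connected_graph unfolding thinly_three_connected_def by blast
  ultimately interpret vertex_split V E v N1 N2 v1 v2 V' E' by unfold_locales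
  show ?thesis using thinly_three_connected_split[OF tc] .
qed

lemma expansion_thinly_three_connected:
  assumes tc: "thinly_three_connected H0 F0" and ex: "expansion H0 F0 G E"
  shows "thinly_three_connected G E"
proof -
  have "(\<lambda>(X, F) (Y, H). split_step X F Y H)\<^sup>*\<^sup>* (H0, F0) (G, E)" using ex unfolding expansion_def .
  then have "thinly_three_connected (fst (G, E)) (snd (G, E))"
    by (induction rule: rtranclp_induct) (use tc split_step_thinly_three_connected in auto)
  then show ?thesis by simp
qed

lemma weakly_4_connected_thinly_three_connected:
  assumes w: "weakly_4_connected V E"
  shows "thinly_three_connected V E"
  unfolding thinly_three_connected_def
proof (intro conjI allI impI)
  show tc: "three_connected V E" using w unfolding weakly_4_connected_def by simp
  fix A B assume "separation V E A B \<and> nontrivial_sep V A B \<and> sep_order A B = 3"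
  then have sep: "separation V E A B" and nt: "nontrivial_sep V A B" and o3: "sep_order A B = 3" by auto
  have "finite A" "finite B"
    using separation_subset[OF sep] three_connected_graph[OF tc] unfolding graph_def by (meson finite_subset)+
  then have "1 \<le> card (A - B)" "1 \<le> card (B - A)"
    using nontrivial_sep_diff_nonempty[OF sep nt] by (simp_all add: Suc_le_eq card_gt_0_iff)
  moreover have "edges_in E A \<le> 4 \<or> edges_in E B \<le> 4"
    using w sep o3 unfolding weakly_4_connected_def by simp
  ultimately show "thin E A B \<or> thin E B A" unfolding thin_def by linarith
qed

theorem lemma4p2:
  fixes H0 G :: "'a set" and F0 E :: "'a set set"
  assumes "weakly_4_connected H0 F0"
    and "expansion H0 F0 G E"
  shows "three_connected G E \<and>
         (\<not> prism G E \<longrightarrow>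
            (\<forall>A B. separation G E A B \<and> nontrivial_sep G A B \<and> sep_order A B = 3 \<longrightarrow>
               (degenerate G E A B \<longleftrightarrow> \<not> degenerate G E B A)))"
proof -
  have thinly: "thinly_three_connected G E"
    using expansion_thinly_three_connected[OF weakly_4_connected_thinly_three_connected[OF assms(1)] assms(2)] .
  then have tc: "three_connected G E" unfolding thinly_three_connected_def by simp
  have g: "graph G E" using three_connected_graph[OF tc] .
  have "degenerate G E A B \<longleftrightarrow> \<not> degenerate G E B A"
    if sep: "separation G E A B" and nt: "nontrivial_sep G A B" and o3: "sep_order A B = 3" for A B
  proof -
    have X: "card (A \<inter> B) = 3" "card (B \<inter> A) = 3" using o3 unfolding sep_order_def by (simp_all add: Int_commute)
    have "thin E A B \<or> thin E B A" using thinly sep nt o3 unfolding thinly_three_connected_def by blast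
    moreover have "\<not> (thin E A B \<and> thin E B A)" by (rule not_thin_both[OF tc sep nt X(1)])
    moreover note degenerate_thin[OF g, of A B] degenerate_thin[OF g, of B A]
      thin_imp_degenerate[OF tc sep nt X(1)]
      thin_imp_degenerate[OF tc separation_swap[OF sep] nontrivial_sep_swap[OF nt] X(2)]
    ultimately show ?thesis by blast
  qed
  with tc show ?thesis by blast
qed

end
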